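(* Let $X$ be a closed subset of $\mathbb{R}^n$, let $p\in\mathbb{N}$, and let $f:X\to\mathbb{R}$. If $f$ is the restriction to $X$ of a function of class $\mathcal{C}^p$ on $\mathbb{R}^n$, then $\nabla^p f:\tau^p(X)\to\mathbb{R}$ (i.e. $\nabla^p f$ is the graph of a function on $\tau^p(X)$). Moreover, if $F\in\mathcal{C}^p(\mathbb{R}^n)$ and $F|X=f$, then for all $a\in X$ and all $\xi\in\tau^p_a(X)\subset\mathcal{P}_p^*$, $$\nabla^p f(\xi)=\xi(T^p_aF),$$ where $T^p_aF$ is the Taylor polynomial of order $p$ of $F$ at $a$.
   Context: Notation. $\mathbb{N}$ denotes the nonnegative integers; multiindex notation $\alpha\in\mathbb{N}^n$, $|\alpha|=\alpha_1+\dots+\alpha_n$, $\alpha!=\alpha_1!\cdots\alpha_n!$, $x^\alpha=x_1^{\alpha_1}\cdots x_n^{\alpha_n}$. $\mathcal{P}_p=\mathcal{P}_p(\mathbb{R}^n)$ is the real vector space of polynomial functions on $\mathbb{R}^n$ of degree at most $p$, $\mathcal{P}_p^*$ its dual, and $r=\dim\mathcal{P}_p$. For $\xi\in\mathcal{P}_p^*$, $b\in\mathbb{R}^n$ and $|\alpha|\le p$ put $\xi_\alpha(b):=\xi\big(\tfrac{1}{\alpha!}(x-b)^\alpha\big)$. For $a\in\mathbb{R}^n$, $\delta_a\in\mathcal{P}_p^*$ is $\delta_a(P)=P(a)$. A bundle over $X$ with fibres in a finite-dimensional real vector space $W$ is a subset $E\subset X\times W$ such that each fibre $E_a=\{w:(a,w)\in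 E\}$ is a linear subspace of $W$. Paratangent bundle of order $p$. For a bundle $E\subset X\times\mathcal{P}_p^*$ let $\Delta E=\{(a,b,\xi+\eta): a,b\in X,\ \xi\in E_a,\ \eta\in E_b,\ |a-b|^{p-|\alpha|}|\eta_\alpha(b)|\le 1\text{ for all }|\alpha|\le p\}$, let $E'=\{(a,\xi)\in X\times\mathcal{P}_p^*: (a,a,\xi)\in\overline{\Delta E}\}$ (closure in $X\times X\times\mathcal{P}_p^*$), and let $\rho(E)=\{(a,\xi):a\in X,\ \xi\in\operatorname{Span}E'_a\}$. Let $E_0=\{(a,\lambda\delta_a):a\in X,\lambda\in\mathbb{R}\}$. The bundles $\rho^i(E_0)$ coincide for all $i\ge 2r$, and $\tau^p(X):=\rho^{2r}(E_0)$, with fibres $\tau^p_a(X)\subset\mathcal{P}_p^*$. The bundle $\nabla^p f$. For a bundle $\Phi\subset X\times(\mathcal{P}_p^*\times\mathbb{R})$ let $\Delta\Phi=\{(a,b,\xi+\eta,\lambda+\mu): a,b\in X,\ (\xi,\lambda)\in\Phi_a,\ (\eta,\mu)\in\Phi_b,\ |a-b|^{p-|\alpha|}|\eta_\alpha(b)|\le1\text{ for all }|\alpha|\le p\}$, $\Phi'=\{(a,\xi,\lambda):(a,a,\xi,\lambda)\in\overline{\Delta\Phi}\}$, and $\rho(\Phi)=\{(a,v): v\in\operatorname{Span}\Phi'_a\}$. Let $\Phi_0=\{(a,\lambda\delta_a,\lambda f(a)):a\in X,\lambda\in\mathbb{R}\}$; the bundles $\rho^i(\Phi_0)$ coincide for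 $i\ge 2(r+1)$ and $\nabla^pf:=\rho^{2(r+1)}(\Phi_0)$. One has $\nabla^pf\subset\tau^p(X)\times\mathbb{R}$. "$\nabla^pf:\tau^p(X)\to\mathbb{R}$" means that for each $a\in X$ and $\xi\in\tau^p_a(X)$ there is exactly one $\lambda$ with $(a,\xi,\lambda)\in\nabla^pf$; this $\lambda$ is denoted $\nabla^pf(\xi)$. *)

theory Defs
  imports "HOL-Analysis.Analysis"
begin

definition mabs :: "('n::finite \<Rightarrow> nat) \<Rightarrow> nat" where
  "mabs \<alpha> = (\<Sum>i\<in>UNIV. \<alpha> i)"

definition mfact :: "('n::finite \<Rightarrow> nat) \<Rightarrow> real" where
  "mfact \<alpha> = (\<Prod>i\<in>UNIV. fact (\<alpha> i))"

definition mpow :: "(real^'n::finite) \<Rightarrow> ('n \<Rightarrow> nat) \<Rightarrow> real" where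
  "mpow x \<alpha> = (\<Prod>i\<in>UNIV. (x $ i) ^ (\<alpha> i))"

definition midx :: "nat \<Rightarrow> ('n::finite \<Rightarrow> nat) set" where
  "midx p = {\<alpha>. mabs \<alpha> \<le> p}"

definition polys :: "nat \<Rightarrow> ((real^'n::finite) \<Rightarrow> real) set" where
  "polys p = {P. \<exists>c. \<forall>x. P x = (\<Sum>\<alpha>\<in>midx p. c \<alpha> * mpow x \<alpha>)}"

(* P_p^* : linear functionals on P_p, normalised to vanish outside P_p *)
definition dual :: "nat \<Rightarrow> (((real^'n::finite) \<Rightarrow> real) \<Rightarrow> real) set" where
  "dual p = {\<xi>. (\<forall>P\<in>polys p. \<forall>Q\<in>polys p. \<xi> (\<lambda>x. P x + Q x) = \<xi> P + \<xi> Q)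
                \<and> (\<forall>P\<in>polys p. \<forall>c. \<xi> (\<lambda>x. c * P x) = c * \<xi> P)
                \<and> (\<forall>P. P \<notin> polys p \<longrightarrow> \<xi> P = 0)}"

definition xi_alpha :: "(((real^'n::finite) \<Rightarrow> real) \<Rightarrow> real) \<Rightarrow> ('n \<Rightarrow> nat) \<Rightarrow> (real^'n) \<Rightarrow> real" where
  "xi_alpha \<xi> \<alpha> b = \<xi> (\<lambda>x. mpow (x - b) \<alpha> / mfact \<alpha>)"

definition delta :: "nat \<Rightarrow> (real^'n::finite) \<Rightarrow> ((real^'n) \<Rightarrow> real) \<Rightarrow> real" where
  "delta p a = (\<lambda>P. if P \<in> polys p then P a else 0)"

(* coordinates of a functional in the monomial basis; gives P_p^* its (finite-dimensional) topology *)
definition coord :: "nat \<Rightarrow> (((real^'n::finite) \<Rightarrow> real) \<Rightarrow> real) \<Rightarrow> ('n \<Rightarrow> nat) \<Rightarrow> real" where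
  "coord p \<xi> = (\<lambda>\<alpha>. if \<alpha> \<in> midx p then \<xi> (\<lambda>x. mpow x \<alpha>) else 0)"

definition lspan :: "(('a \<Rightarrow> real) \<Rightarrow> real) set \<Rightarrow> (('a \<Rightarrow> real) \<Rightarrow> real) set" where
  "lspan S = {(\<lambda>P. \<Sum>\<xi>\<in>T. c \<xi> * \<xi> P) | T c. finite T \<and> T \<subseteq> S}"

definition lspan2 :: "((('a \<Rightarrow> real) \<Rightarrow> real) \<times> real) set \<Rightarrow> ((('a \<Rightarrow> real) \<Rightarrow> real) \<times> real) set" where
  "lspan2 S = {((\<lambda>P. \<Sum>v\<in>T. c v * fst v P), (\<Sum>v\<in>T. c v * snd v)) | T c. finite T \<and> T \<subseteq> S}"

definition Delta_E :: "nat \<Rightarrow> (real^'n::finite) set \<Rightarrow> ((real^'n) \<times> (((real^'n) \<Rightarrow> real) \<Rightarrow> real)) set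
     \<Rightarrow> ((real^'n) \<times> (real^'n) \<times> (((real^'n) \<Rightarrow> real) \<Rightarrow> real)) set" where
  "Delta_E p X E = {(a, b, (\<lambda>P. \<xi> P + \<eta> P)) | a b \<xi> \<eta>.
      a \<in> X \<and> b \<in> X \<and> (a, \<xi>) \<in> E \<and> (b, \<eta>) \<in> E \<and>
      (\<forall>\<alpha>\<in>midx p. norm (a - b) ^ (p - mabs \<alpha>) * \<bar>xi_alpha \<eta> \<alpha> b\<bar> \<le> 1)}"

definition Eprime :: "nat \<Rightarrow> (real^'n::finite) set \<Rightarrow> ((real^'n) \<times> (((real^'n) \<Rightarrow> real) \<Rightarrow> real)) set
     \<Rightarrow> ((real^'n) \<times> (((real^'n) \<Rightarrow> real) \<Rightarrow> real)) set" where
  "Eprime p X E = {(a, \<xi>). a \<in> X \<and> \<xi> \<in> dual p \<and>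
      (a, a, coord p \<xi>) \<in> closure ((\<lambda>(a, b, \<eta>). (a, b, coord p \<eta>)) ` Delta_E p X E)}"

definition rho :: "nat \<Rightarrow> (real^'n::finite) set \<Rightarrow> ((real^'n) \<times> (((real^'n) \<Rightarrow> real) \<Rightarrow> real)) set
     \<Rightarrow> ((real^'n) \<times> (((real^'n) \<Rightarrow> real) \<Rightarrow> real)) set" where
  "rho p X E = {(a, \<xi>). a \<in> X \<and> \<xi> \<in> lspan {\<eta>. (a, \<eta>) \<in> Eprime p X E}}"

definition E0 :: "nat \<Rightarrow> (real^'n::finite) set \<Rightarrow> ((real^'n) \<times> (((real^'n) \<Rightarrow> real) \<Rightarrow> real)) set" where
  "E0 p X = {(a, (\<lambda>P. l * delta p a P)) | a l. a \<in> X}"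

definition tau :: "nat \<Rightarrow> (real^'n::finite) set \<Rightarrow> ((real^'n) \<times> (((real^'n) \<Rightarrow> real) \<Rightarrow> real)) set" where
  "tau p X = (rho p X ^^ (2 * card (midx p :: ('n \<Rightarrow> nat) set))) (E0 p X)"

definition Delta_Phi :: "nat \<Rightarrow> (real^'n::finite) set \<Rightarrow> ((real^'n) \<times> (((real^'n) \<Rightarrow> real) \<Rightarrow> real) \<times> real) set
     \<Rightarrow> ((real^'n) \<times> (real^'n) \<times> (((real^'n) \<Rightarrow> real) \<Rightarrow> real) \<times> real) set" where
  "Delta_Phi p X \<Phi> = {(a, b, (\<lambda>P. \<xi> P + \<eta> P), l + m) | a b \<xi> l \<eta> m.
      a \<in> X \<and> b \<in> X \<and> (a, \<xi>, l) \<in> \<Phi> \<and> (b, \<eta>, m) \<in> \<Phi> \<and>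
      (\<forall>\<alpha>\<in>midx p. norm (a - b) ^ (p - mabs \<alpha>) * \<bar>xi_alpha \<eta> \<alpha> b\<bar> \<le> 1)}"

definition Phiprime :: "nat \<Rightarrow> (real^'n::finite) set \<Rightarrow> ((real^'n) \<times> (((real^'n) \<Rightarrow> real) \<Rightarrow> real) \<times> real) set
     \<Rightarrow> ((real^'n) \<times> (((real^'n) \<Rightarrow> real) \<Rightarrow> real) \<times> real) set" where
  "Phiprime p X \<Phi> = {(a, \<xi>, l). a \<in> X \<and> \<xi> \<in> dual p \<and>
      (a, a, coord p \<xi>, l) \<in> closure ((\<lambda>(a, b, \<eta>, m). (a, b, coord p \<eta>, m)) ` Delta_Phi p X \<Phi>)}"

definition rhoPhi :: "nat \<Rightarrow> (real^'n::finite) set \<Rightarrow> ((real^'n) \<times> (((real^'n) \<Rightarrow> real) \<Rightarrow> real) \<times> real) set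
     \<Rightarrow> ((real^'n) \<times> (((real^'n) \<Rightarrow> real) \<Rightarrow> real) \<times> real) set" where
  "rhoPhi p X \<Phi> = {(a, v). a \<in> X \<and> v \<in> lspan2 {w. (a, w) \<in> Phiprime p X \<Phi>}}"

definition Phi0 :: "nat \<Rightarrow> (real^'n::finite) set \<Rightarrow> ((real^'n) \<Rightarrow> real)
     \<Rightarrow> ((real^'n) \<times> (((real^'n) \<Rightarrow> real) \<Rightarrow> real) \<times> real) set" where
  "Phi0 p X f = {(a, (\<lambda>P. l * delta p a P), l * f a) | a l. a \<in> X}"

definition nabla :: "nat \<Rightarrow> (real^'n::finite) set \<Rightarrow> ((real^'n) \<Rightarrow> real)
     \<Rightarrow> ((real^'n) \<times> (((real^'n) \<Rightarrow> real) \<Rightarrow> real) \<times> real) set" where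
  "nabla p X f = (rhoPhi p X ^^ (2 * (card (midx p :: ('n \<Rightarrow> nat) set) + 1))) (Phi0 p X f)"

definition pdiff :: "'n::finite \<Rightarrow> ((real^'n) \<Rightarrow> real) \<Rightarrow> (real^'n) \<Rightarrow> real" where
  "pdiff i F x = deriv (\<lambda>t. F (x + t *\<^sub>R axis i 1)) 0"

fun Ck :: "nat \<Rightarrow> ((real^'n::finite) \<Rightarrow> real) \<Rightarrow> bool" where
  "Ck 0 F = continuous_on UNIV F"
| "Ck (Suc k) F = (continuous_on UNIV F \<and>
      (\<forall>i x. (\<lambda>t. F (x + t *\<^sub>R axis i 1)) differentiable (at 0)) \<and>
      (\<forall>i. Ck k (pdiff i F)))"

definition var_list :: "'n::finite list" where
  "var_list = (SOME xs. distinct xs \<and> set xs = UNIV)"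

(* D^alpha F (order of differentiation irrelevant for C^p functions by Schwarz) *)
definition mderiv :: "('n::finite \<Rightarrow> nat) \<Rightarrow> ((real^'n) \<Rightarrow> real) \<Rightarrow> (real^'n) \<Rightarrow> real" where
  "mderiv \<alpha> F = foldr (\<lambda>i G. (pdiff i ^^ (\<alpha> i)) G) var_list F"

definition taylor :: "nat \<Rightarrow> (real^'n::finite) \<Rightarrow> ((real^'n) \<Rightarrow> real) \<Rightarrow> (real^'n) \<Rightarrow> real" where
  "taylor p a F = (\<lambda>x. \<Sum>\<alpha>\<in>midx p. mderiv \<alpha> F a / mfact \<alpha> * mpow (x - a) \<alpha>)"

end

theory Submission
  imports Defs
begin

text \<open>Let \<open>F\<close> be \<open>C\<^sup>p\<close> and consider the graph of \<open>(a, \<xi>) \<mapsto> \<xi>(T\<^sup>p\<^sub>a F)\<close>. If \<open>\<eta>\<close> satisfies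
  \<open>\<bar>a - b\<bar>\<^sup>p\<^sup>-\<^sup>|\<^sup>\<alpha>\<^sup>| \<bar>\<eta>\<^sub>\<alpha>(b)\<bar> \<le> 1\<close>, then re-expanding \<open>T\<^sup>p\<^sub>a F\<close> around \<open>b\<close> and using Taylor's theorem for the
  derivatives \<open>D\<^sup>\<gamma>F\<close> shows \<open>\<eta>(T\<^sup>p\<^sub>b F) - \<eta>(T\<^sup>p\<^sub>a F) \<rightarrow> 0\<close> as \<open>a, b \<rightarrow> a\<^sub>0\<close>, uniformly in \<open>\<eta>\<close>. Hence the
  sums \<open>\<xi> + \<eta>\<close> entering \<open>\<Delta>\<close> carry values \<open>\<xi>(T\<^sub>a F) + \<eta>(T\<^sub>b F)\<close> that are asymptotically
  \<open>(\<xi> + \<eta>)(T\<^sub>a F)\<close>, and since \<open>\<xi> \<mapsto> \<xi>(T\<^sub>a F)\<close> is continuous and linear, the operations closure-at-the-diagonal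
  and span preserve the graph. Starting from \<open>\<Phi>\<^sub>0\<close>, which lies on the graph because \<open>F = f\<close> on \<open>X\<close>, every
  \<open>\<rho>\<^sup>k(\<Phi>\<^sub>0)\<close> lies on the graph (uniqueness), and every element of \<open>\<rho>\<^sup>k(E\<^sub>0)\<close> lifts to \<open>\<rho>\<^sup>k(\<Phi>\<^sub>0)\<close>
  with its value (existence).\<close>

lemma finite_midx: "finite (midx p :: ('n::finite \<Rightarrow> nat) set)"
proof -
  have "midx p \<subseteq> PiE (UNIV::'n set) (\<lambda>_. {..p})"
  proof
    fix \<alpha> :: "'n \<Rightarrow> nat" assume "\<alpha> \<in> midx p"
    hence "(\<Sum>i\<in>UNIV. \<alpha> i) \<le> p" by (simp add: midx_def mabs_def)
    hence "\<alpha> i \<le> p" for i using member_le_sum[of i UNIV \<alpha>] by simp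
    thus "\<alpha> \<in> PiE UNIV (\<lambda>_. {..p})" by auto
  qed
  thus ?thesis by (rule finite_subset) (simp add: finite_PiE)
qed

lemma zero_in_midx [simp]: "(\<lambda>_. 0) \<in> midx p"
  by (simp add: midx_def mabs_def)

lemma midx_0: "midx 0 = {\<lambda>_. 0}"
  by (auto simp: midx_def mabs_def fun_eq_iff)

lemma mfact_pos: "mfact \<alpha> > 0"
  by (simp add: mfact_def prod_pos)

lemma mfact_nonzero [simp]: "mfact \<alpha> \<noteq> 0"
  using mfact_pos[of \<alpha>] by simp

lemma mpow_zero_vec: "mpow (0::real^'n::finite) \<delta> = (if \<delta> = (\<lambda>_. 0) then 1 else 0)"
proof (cases "\<delta> = (\<lambda>_. 0)")
  case False
  then obtain i where "\<delta> i \<noteq> 0" by auto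
  hence "\<exists>j\<in>UNIV. (0::real^'n) $ j ^ \<delta> j = 0" by auto
  thus ?thesis using False unfolding mpow_def by (subst prod_zero) auto
qed (simp add: mpow_def)

lemma mabs_add: "mabs (\<lambda>i. \<gamma> i + \<delta> i) = mabs \<gamma> + mabs \<delta>"
  by (simp add: mabs_def sum.distrib)

lemma mabs_mono: "(\<And>i. \<gamma> i \<le> \<beta> i) \<Longrightarrow> mabs \<gamma> \<le> mabs \<beta>"
  by (simp add: mabs_def sum_mono)

definition poly_of_coeffs :: "nat \<Rightarrow> (('n::finite \<Rightarrow> nat) \<Rightarrow> real) \<Rightarrow> real^'n \<Rightarrow> real" where
  "poly_of_coeffs p c = (\<lambda>x. \<Sum>\<alpha>\<in>midx p. c \<alpha> * mpow x \<alpha>)"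

lemma polys_iff: "P \<in> polys p \<longleftrightarrow> (\<exists>c. P = poly_of_coeffs p c)"
  by (auto simp: polys_def poly_of_coeffs_def fun_eq_iff)

lemma poly_of_coeffs_in_polys: "poly_of_coeffs p c \<in> polys p"
  by (auto simp: polys_iff)

lemma polys_add: "P \<in> polys p \<Longrightarrow> Q \<in> polys p \<Longrightarrow> (\<lambda>x. P x + Q x) \<in> polys p"
proof -
  assume "P \<in> polys p" "Q \<in> polys p"
  then obtain c d where "P = poly_of_coeffs p c" "Q = poly_of_coeffs p d" by (auto simp: polys_iff)
  hence "(\<lambda>x. P x + Q x) = poly_of_coeffs p (\<lambda>\<alpha>. c \<alpha> + d \<alpha>)"
    by (simp add: poly_of_coeffs_def fun_eq_iff sum.distrib algebra_simps)
  thus ?thesis by (simp add: poly_of_coeffs_in_polys)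
qed

lemma polys_scale: "P \<in> polys p \<Longrightarrow> (\<lambda>x. c * P x) \<in> polys p"
proof -
  assume "P \<in> polys p"
  then obtain d where "P = poly_of_coeffs p d" by (auto simp: polys_iff)
  hence "(\<lambda>x. c * P x) = poly_of_coeffs p (\<lambda>\<alpha>. c * d \<alpha>)"
    by (simp add: poly_of_coeffs_def fun_eq_iff sum_distrib_left algebra_simps)
  thus ?thesis by (simp add: poly_of_coeffs_in_polys)
qed

lemma polys_zero: "(\<lambda>x. 0) \<in> polys p"
  using poly_of_coeffs_in_polys[of p "\<lambda>_. 0"] by (simp add: poly_of_coeffs_def)

lemma polys_sum:
  "finite I \<Longrightarrow> (\<And>i. i \<in> I \<Longrightarrow> P i \<in> polys p) \<Longrightarrow> (\<lambda>x. \<Sum>i\<in>I. c i * P i x) \<in> polys p"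
  by (induction I rule: finite_induct) (simp_all add: polys_zero polys_add polys_scale)

lemma monomial_in_polys: "\<alpha> \<in> midx p \<Longrightarrow> (\<lambda>x. mpow x \<alpha>) \<in> polys p"
proof -
  assume \<alpha>: "\<alpha> \<in> midx p"
  have "(\<lambda>x. mpow x \<alpha>) = poly_of_coeffs p (\<lambda>\<beta>. if \<beta> = \<alpha> then 1 else 0)"
  proof
    fix x
    have "(\<Sum>\<beta>\<in>midx p. (if \<beta> = \<alpha> then 1 else 0) * mpow x \<beta>)
        = (\<Sum>\<beta>\<in>midx p. if \<beta> = \<alpha> then mpow x \<beta> else 0)"
      by (rule sum.cong) auto
    thus "mpow x \<alpha> = poly_of_coeffs p (\<lambda>\<beta>. if \<beta> = \<alpha> then 1 else 0) x"
      using \<alpha> by (simp add: poly_of_coeffs_def finite_midx)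
  qed
  thus ?thesis by (simp add: poly_of_coeffs_in_polys)
qed

lemma dual_scale: "\<xi> \<in> dual p \<Longrightarrow> P \<in> polys p \<Longrightarrow> \<xi> (\<lambda>x. c * P x) = c * \<xi> P"
  unfolding dual_def by blast

lemma dual_add: "\<xi> \<in> dual p \<Longrightarrow> P \<in> polys p \<Longrightarrow> Q \<in> polys p \<Longrightarrow> \<xi> (\<lambda>x. P x + Q x) = \<xi> P + \<xi> Q"
  unfolding dual_def by blast

lemma dual_sum:
  assumes "\<xi> \<in> dual p" "finite I" "\<And>i. i \<in> I \<Longrightarrow> P i \<in> polys p"
  shows "\<xi> (\<lambda>x. \<Sum>i\<in>I. c i * P i x) = (\<Sum>i\<in>I. c i * \<xi> (P i))"
  using assms(2,3)
proof (induction I rule: finite_induct)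
  case empty
  have "\<xi> (\<lambda>x. 0 * 0) = 0 * \<xi> (\<lambda>x. 0)" by (rule dual_scale[OF assms(1) polys_zero])
  thus ?case by simp
next
  case (insert j I)
  have "\<xi> (\<lambda>x. \<Sum>i\<in>insert j I. c i * P i x) = \<xi> (\<lambda>x. c j * P j x + (\<Sum>i\<in>I. c i * P i x))"
    using insert by simp
  also have "\<dots> = \<xi> (\<lambda>x. c j * P j x) + \<xi> (\<lambda>x. \<Sum>i\<in>I. c i * P i x)"
    using insert by (intro dual_add[OF assms(1)] polys_sum polys_scale) auto
  also have "\<xi> (\<lambda>x. c j * P j x) = c j * \<xi> (P j)"
    using insert by (intro dual_scale[OF assms(1)]) auto
  finally show ?case using insert by simp
qed

lemma dual_lincomb:
  assumes T: "finite T" "\<And>t. t \<in> T \<Longrightarrow> \<phi> t \<in> dual p"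
  shows "(\<lambda>P. \<Sum>t\<in>T. c t * \<phi> t P) \<in> dual p"
proof -
  have "(\<Sum>t\<in>T. c t * \<phi> t (\<lambda>x. P x + Q x)) = (\<Sum>t\<in>T. c t * \<phi> t P) + (\<Sum>t\<in>T. c t * \<phi> t Q)"
    if "P \<in> polys p" "Q \<in> polys p" for P Q
    unfolding sum.distrib[symmetric] using T that by (intro sum.cong refl) (simp add: dual_add[OF T(2)] distrib_left)
  moreover have "(\<Sum>t\<in>T. c t * \<phi> t (\<lambda>x. d * P x)) = d * (\<Sum>t\<in>T. c t * \<phi> t P)"
    if "P \<in> polys p" for P d
    unfolding sum_distrib_left using T that by (intro sum.cong refl) (simp add: dual_scale[OF T(2)])
  moreover have "(\<Sum>t\<in>T. c t * \<phi> t P) = 0" if "P \<notin> polys p" for P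
    using T that by (intro sum.neutral) (auto simp: dual_def)
  ultimately show ?thesis unfolding dual_def by auto
qed

lemma dual_plus: "\<xi> \<in> dual p \<Longrightarrow> \<eta> \<in> dual p \<Longrightarrow> (\<lambda>P. \<xi> P + \<eta> P) \<in> dual p"
  unfolding dual_def by (auto simp: algebra_simps)

lemma delta_in_dual: "(\<lambda>P. l * delta p a P) \<in> dual p"
  unfolding dual_def delta_def by (auto simp: polys_add polys_scale algebra_simps)

subsection \<open>Functions of class \<open>C\<^sup>k\<close> and symmetry of derivatives\<close>

lemma Ck_SucD: "Ck (Suc k) G \<Longrightarrow> Ck k G"
  by (induction k arbitrary: G) auto

lemma Ck_mono: "j \<le> k \<Longrightarrow> Ck k G \<Longrightarrow> Ck j G"
  by (induction k) (use Ck_SucD le_Suc_eq in blast)+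

lemma Ck_imp_continuous: "Ck k G \<Longrightarrow> continuous_on UNIV G"
  by (cases k) auto

lemma Ck_foldr_pdiff: "length is \<le> k \<Longrightarrow> Ck k G \<Longrightarrow> Ck (k - length is) (foldr pdiff is G)"
proof (induction "is")
  case (Cons i "is")
  hence "Ck (Suc (k - length (i # is))) (foldr pdiff is G)"
    by (simp add: Suc_diff_Suc)
  thus ?case by simp
qed simp

lemma Ck_has_derivative_axis:
  assumes "Ck (Suc k) G"
  shows "((\<lambda>s. G (y + s *\<^sub>R axis i 1)) has_real_derivative pdiff i G (y + s0 *\<^sub>R axis i 1)) (at s0)"
proof -
  define z where "z = y + s0 *\<^sub>R axis i (1::real)"
  have "(\<lambda>t. G (z + t *\<^sub>R axis i 1)) differentiable (at 0)" using assms by simp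
  hence "((\<lambda>t. G (z + t *\<^sub>R axis i 1)) has_real_derivative pdiff i G z) (at 0)"
    unfolding pdiff_def by (simp add: DERIV_deriv_iff_real_differentiable)
  moreover have "(\<lambda>t. G (z + t *\<^sub>R axis i 1)) = (\<lambda>t. (\<lambda>s. G (y + s *\<^sub>R axis i 1)) (t + s0))"
    by (simp add: z_def scaleR_add_left add_ac)
  ultimately have "((\<lambda>s. G (y + s *\<^sub>R axis i 1)) has_real_derivative pdiff i G z) (at (0 + s0))"
    by (simp only: DERIV_shift)
  thus ?thesis by (simp add: z_def)
qed

definition second_difference :: "((real^'n::finite) \<Rightarrow> real) \<Rightarrow> real^'n \<Rightarrow> 'n \<Rightarrow> 'n \<Rightarrow> real \<Rightarrow> real" where
  "second_difference G x i j h =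
     G (x + h *\<^sub>R axis i 1 + h *\<^sub>R axis j 1) - G (x + h *\<^sub>R axis i 1) - G (x + h *\<^sub>R axis j 1) + G x"

lemma second_difference_commute: "second_difference G x i j h = second_difference G x j i h"
  by (simp add: second_difference_def algebra_simps)

lemma second_difference_mvt:
  assumes G: "Ck 2 G" and h: "h > 0"
  shows "\<exists>s t. 0 < s \<and> s < h \<and> 0 < t \<and> t < h \<and>
    second_difference G x i j h = h * h * pdiff j (pdiff i G) (x + s *\<^sub>R axis i 1 + t *\<^sub>R axis j 1)"
proof -
  define u where "u = axis i (1::real)"
  define v where "v = axis j (1::real)"
  have G2: "Ck (Suc (Suc 0)) G" using G by (simp add: numeral_2_eq_2)
  define \<phi> where "\<phi> = (\<lambda>\<sigma>. G ((x + h *\<^sub>R v) + \<sigma> *\<^sub>R u) - G (x + \<sigma> *\<^sub>R u))"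
  have "DERIV \<phi> \<sigma> :> pdiff i G ((x + h *\<^sub>R v) + \<sigma> *\<^sub>R u) - pdiff i G (x + \<sigma> *\<^sub>R u)" for \<sigma>
    unfolding \<phi>_def u_def by (intro derivative_intros Ck_has_derivative_axis[OF G2])
  hence "\<exists>s. 0 < s \<and> s < h \<and>
      \<phi> h - \<phi> 0 = (h - 0) * (pdiff i G ((x + h *\<^sub>R v) + s *\<^sub>R u) - pdiff i G (x + s *\<^sub>R u))"
    by (intro MVT2[OF h])
  then obtain s where s: "0 < s" "s < h"
    "\<phi> h - \<phi> 0 = h * (pdiff i G ((x + h *\<^sub>R v) + s *\<^sub>R u) - pdiff i G (x + s *\<^sub>R u))"
    by auto
  define \<psi> where "\<psi> = (\<lambda>\<tau>. pdiff i G ((x + s *\<^sub>R u) + \<tau> *\<^sub>R v))"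
  have "DERIV \<psi> \<tau> :> pdiff j (pdiff i G) ((x + s *\<^sub>R u) + \<tau> *\<^sub>R v)" for \<tau>
    unfolding \<psi>_def v_def by (rule Ck_has_derivative_axis[of 0]) (use G2 in simp)
  hence "\<exists>t. 0 < t \<and> t < h \<and> \<psi> h - \<psi> 0 = (h - 0) * pdiff j (pdiff i G) ((x + s *\<^sub>R u) + t *\<^sub>R v)"
    by (intro MVT2[OF h])
  then obtain t where t: "0 < t" "t < h"
    "\<psi> h - \<psi> 0 = h * pdiff j (pdiff i G) ((x + s *\<^sub>R u) + t *\<^sub>R v)"
    by auto
  have "\<psi> h - \<psi> 0 = pdiff i G ((x + h *\<^sub>R v) + s *\<^sub>R u) - pdiff i G (x + s *\<^sub>R u)"
    unfolding \<psi>_def by (simp add: algebra_simps)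
  moreover have "\<phi> h - \<phi> 0 = second_difference G x i j h"
    unfolding \<phi>_def second_difference_def u_def v_def by (simp add: algebra_simps)
  ultimately show ?thesis
    using s t unfolding u_def v_def by (metis mult.assoc)
qed

lemma second_difference_tendsto:
  assumes G: "Ck 2 G"
  shows "((\<lambda>h. second_difference G x i j h / (h * h)) \<longlongrightarrow> pdiff j (pdiff i G) x) (at_right 0)"
proof (rule tendstoI)
  fix e :: real assume e: "e > 0"
  let ?A = "pdiff j (pdiff i G)"
  have "continuous_on UNIV ?A"
    using G by (simp add: numeral_2_eq_2 Ck_imp_continuous)
  hence "continuous (at x) ?A"
    by (simp add: continuous_on_eq_continuous_at)
  then obtain d where d: "d > 0" "\<And>y. dist y x < d \<Longrightarrow> dist (?A y) (?A x) < e"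
    using e unfolding continuous_at_eps_delta by blast
  have "dist (second_difference G x i j h / (h * h)) (?A x) < e" if h: "h > 0" "h < d / 2" for h
  proof -
    obtain s t where st: "0 < s" "s < h" "0 < t" "t < h"
      "second_difference G x i j h = h * h * ?A (x + s *\<^sub>R axis i 1 + t *\<^sub>R axis j 1)"
      using second_difference_mvt[OF G h(1)] by blast
    have "dist (x + s *\<^sub>R axis i 1 + t *\<^sub>R axis j 1) x = norm (s *\<^sub>R axis i (1::real) + t *\<^sub>R axis j 1)"
      by (simp add: dist_norm add.assoc)
    also have "\<dots> \<le> norm (s *\<^sub>R axis i (1::real)) + norm (t *\<^sub>R axis j (1::real))"
      by (rule norm_triangle_ineq)
    also have "\<dots> < d" using st h by simp
    finally show ?thesis using d(2) st(5) h(1) by simp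
  qed
  thus "eventually (\<lambda>h. dist (second_difference G x i j h / (h * h)) (?A x) < e) (at_right 0)"
    using d(1) by (subst eventually_at_right[of 0 "d / 2"]) (auto intro!: exI[of _ "d / 2"])
qed

text \<open>Schwarz's theorem: both mixed derivatives are limits of the same symmetric second difference.\<close>

lemma pdiff_commute:
  assumes "Ck 2 G"
  shows "pdiff j (pdiff i G) x = pdiff i (pdiff j G) x"
  using second_difference_tendsto[OF assms, of x j i]
  by (intro tendsto_unique[OF trivial_limit_at_right_real second_difference_tendsto[OF assms]])
     (simp add: second_difference_commute)

lemma foldr_pdiff_move_front:
  "Ck (length (js1 @ i # js2)) G \<Longrightarrow> foldr pdiff (js1 @ i # js2) G = foldr pdiff (i # js1 @ js2) G"
proof (induction js1)
  case (Cons j js1)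
  have IH: "foldr pdiff (js1 @ i # js2) G = foldr pdiff (i # js1 @ js2) G"
    using Cons by (intro Cons.IH) (rule Ck_mono[OF _ Cons.prems], simp)
  have "Ck (length (j # js1 @ i # js2) - length (js1 @ js2)) (foldr pdiff (js1 @ js2) G)"
    using Cons.prems by (intro Ck_foldr_pdiff) auto
  hence "Ck 2 (foldr pdiff (js1 @ js2) G)"
    by (rule Ck_mono[rotated]) simp
  hence "pdiff j (pdiff i (foldr pdiff (js1 @ js2) G)) = pdiff i (pdiff j (foldr pdiff (js1 @ js2) G))"
    by (intro ext pdiff_commute)
  thus ?case using IH by simp
qed simp

lemma foldr_pdiff_perm:
  "mset is = mset js \<Longrightarrow> Ck (length is) G \<Longrightarrow> foldr pdiff is G = foldr pdiff js G"
proof (induction "is" arbitrary: js)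
  case (Cons i "is")
  have "i \<in> set js" using Cons.prems(1) by (metis list.set_intros(1) set_mset_mset)
  then obtain js1 js2 where js: "js = js1 @ i # js2" by (meson split_list)
  have "Ck (length is) G"
    using Cons.prems(2) by (rule Ck_mono[rotated]) simp
  hence "foldr pdiff is G = foldr pdiff (js1 @ js2) G"
    using Cons.prems(1) js by (intro Cons.IH) simp_all
  hence "foldr pdiff (i # is) G = foldr pdiff (i # js1 @ js2) G" by simp
  also have "\<dots> = foldr pdiff js G"
  proof -
    have "length (js1 @ i # js2) = length (i # is)"
      using mset_eq_length[OF Cons.prems(1)] js by simp
    hence "Ck (length (js1 @ i # js2)) G" using Cons.prems(2) by (simp only:)
    thus ?thesis unfolding js by (rule foldr_pdiff_move_front[symmetric])
  qed
  finally show ?case .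
qed simp

definition mlist :: "('n::finite \<Rightarrow> nat) \<Rightarrow> 'n list" where
  "mlist \<alpha> = concat (map (\<lambda>i. replicate (\<alpha> i) i) var_list)"

lemma var_list: "distinct (var_list :: 'n::finite list) \<and> set (var_list :: 'n list) = UNIV"
  unfolding var_list_def
  by (rule someI_ex) (metis finite_distinct_list finite_class.finite_UNIV)

lemma set_var_list [simp]: "set var_list = UNIV"
  using var_list by blast

lemma mderiv_eq_foldr_pdiff: "mderiv \<alpha> G = foldr pdiff (mlist \<alpha>) G"
proof -
  have "foldr (\<lambda>i G. (pdiff i ^^ (\<alpha> i)) G) xs G
      = foldr pdiff (concat (map (\<lambda>i. replicate (\<alpha> i) i) xs)) G" for xs
    by (induction xs) (simp_all del: foldr_replicate add: foldr_replicate[symmetric])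
  thus ?thesis by (simp add: mderiv_def mlist_def)
qed

lemma mset_mlist: "mset (mlist \<alpha>) = (\<Sum>i\<in>UNIV. replicate_mset (\<alpha> i) i)"
proof -
  have "mset (mlist \<alpha>) = (\<Sum>i\<leftarrow>var_list. replicate_mset (\<alpha> i) i)"
    by (simp add: mlist_def mset_concat comp_def)
  also have "\<dots> = (\<Sum>i\<in>set var_list. replicate_mset (\<alpha> i) i)"
    by (rule sum_list_distinct_conv_sum_set) (use var_list in blast)
  finally show ?thesis by simp
qed

lemma length_mlist: "length (mlist \<alpha>) = mabs \<alpha>"
proof -
  have "length (mlist \<alpha>) = sum_list (map \<alpha> var_list)"
    by (simp add: mlist_def length_concat comp_def)
  also have "\<dots> = (\<Sum>i\<in>set var_list. \<alpha> i)"
    by (rule sum_list_distinct_conv_sum_set) (use var_list in blast)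
  finally show ?thesis by (simp add: mabs_def)
qed

lemma mderiv_zero [simp]:
  fixes G :: "real^'n::finite \<Rightarrow> real"
  shows "mderiv (\<lambda>_. 0) G = G"
proof -
  have "mlist (\<lambda>_::'n. 0) = []"
    by (simp add: mlist_def concat_eq_Nil_conv)
  thus ?thesis by (simp add: mderiv_eq_foldr_pdiff)
qed

lemma replicate_mset_add: "replicate_mset (m + n) x = replicate_mset m x + replicate_mset n x"
  by (induction m) auto

lemma Ck_mderiv: "mabs \<alpha> \<le> k \<Longrightarrow> Ck k G \<Longrightarrow> Ck (k - mabs \<alpha>) (mderiv \<alpha> G)"
  unfolding mderiv_eq_foldr_pdiff using Ck_foldr_pdiff[of "mlist \<alpha>" k G] by (simp add: length_mlist)

lemma mderiv_mderiv:
  assumes "Ck (mabs \<gamma> + mabs \<delta>) G"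
  shows "mderiv \<delta> (mderiv \<gamma> G) = mderiv (\<lambda>i. \<gamma> i + \<delta> i) G"
proof -
  have "mderiv \<delta> (mderiv \<gamma> G) = foldr pdiff (mlist \<delta> @ mlist \<gamma>) G"
    by (simp add: mderiv_eq_foldr_pdiff)
  also have "\<dots> = foldr pdiff (mlist (\<lambda>i. \<gamma> i + \<delta> i)) G"
    using assms
    by (intro foldr_pdiff_perm)
       (auto simp: mset_mlist replicate_mset_add sum.distrib length_mlist add.commute)
  finally show ?thesis by (simp add: mderiv_eq_foldr_pdiff)
qed

lemma mderiv_pdiff:
  assumes "Ck (Suc (mabs \<delta>)) G"
  shows "mderiv \<delta> (pdiff j G) = mderiv (\<delta>(j := \<delta> j + 1)) G"
proof -
  have "(\<Sum>i\<in>UNIV. replicate_mset ((\<delta>(j := \<delta> j + 1)) i) i)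
      = (\<Sum>i\<in>UNIV. replicate_mset (\<delta> i) i + (if i = j then {#j#} else {#}))"
    by (intro sum.cong) auto
  hence "mset (mlist \<delta> @ [j]) = mset (mlist (\<delta>(j := \<delta> j + 1)))"
    by (simp add: mset_mlist sum.distrib)
  hence "foldr pdiff (mlist \<delta> @ [j]) G = foldr pdiff (mlist (\<delta>(j := \<delta> j + 1))) G"
    using assms by (intro foldr_pdiff_perm) (simp_all add: length_mlist)
  thus ?thesis by (simp add: mderiv_eq_foldr_pdiff)
qed

subsection \<open>Taylor polynomials\<close>

definition mbox :: "('n::finite \<Rightarrow> nat) \<Rightarrow> ('n \<Rightarrow> nat) set" where
  "mbox \<beta> = PiE UNIV (\<lambda>i. {..\<beta> i})"

lemma mbox_iff: "\<gamma> \<in> mbox \<beta> \<longleftrightarrow> (\<forall>i. \<gamma> i \<le> \<beta> i)"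
  by (simp add: mbox_def PiE_iff)

lemma finite_mbox: "finite (mbox \<beta>)"
  by (simp add: mbox_def finite_PiE)

lemma mbox_subset_midx: "\<beta> \<in> midx p \<Longrightarrow> \<gamma> \<in> mbox \<beta> \<Longrightarrow> \<gamma> \<in> midx p"
  using mabs_mono[of \<gamma> \<beta>] by (auto simp: midx_def mbox_iff)

lemma mabs_diff: "(\<And>i. \<gamma> i \<le> \<beta> i) \<Longrightarrow> mabs (\<lambda>i. \<beta> i - \<gamma> i) = mabs \<beta> - mabs \<gamma>"
  using mabs_add[of "\<lambda>i. \<beta> i - \<gamma> i" \<gamma>] by simp

lemma binomial_div_fact:
  "(a + b :: real) ^ n / fact n = (\<Sum>k\<le>n. a ^ k / fact k * (b ^ (n - k) / fact (n - k)))"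
proof -
  have "(a + b) ^ n / fact n = (\<Sum>k\<le>n. of_nat (n choose k) * a ^ k * b ^ (n - k) / fact n)"
    by (simp add: binomial_ring sum_divide_distrib)
  also have "\<dots> = (\<Sum>k\<le>n. a ^ k / fact k * (b ^ (n - k) / fact (n - k)))"
    by (intro sum.cong refl) (simp add: binomial_fact field_simps)
  finally show ?thesis .
qed

lemma mpow_add_div_mfact:
  "mpow (x + y) \<beta> / mfact \<beta> =
    (\<Sum>\<gamma>\<in>mbox \<beta>. (mpow x \<gamma> / mfact \<gamma>) * (mpow y (\<lambda>i. \<beta> i - \<gamma> i) / mfact (\<lambda>i. \<beta> i - \<gamma> i)))"
proof -
  have div: "mpow z \<gamma> / mfact \<gamma> = (\<Prod>i\<in>UNIV. (z $ i) ^ (\<gamma> i) / fact (\<gamma> i))" for z and \<gamma> :: "'a \<Rightarrow> nat"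
    by (simp add: mpow_def mfact_def prod_dividef)
  have "mpow (x + y) \<beta> / mfact \<beta>
      = (\<Prod>i\<in>UNIV. \<Sum>k\<le>\<beta> i. (x $ i) ^ k / fact k * ((y $ i) ^ (\<beta> i - k) / fact (\<beta> i - k)))"
    by (simp add: div binomial_div_fact)
  also have "\<dots> = (\<Sum>g\<in>mbox \<beta>. \<Prod>i\<in>UNIV. (x $ i) ^ g i / fact (g i) * ((y $ i) ^ (\<beta> i - g i) / fact (\<beta> i - g i)))"
    unfolding mbox_def by (rule prod_sum_PiE) auto
  also have "\<dots> = (\<Sum>\<gamma>\<in>mbox \<beta>. (mpow x \<gamma> / mfact \<gamma>) * (mpow y (\<lambda>i. \<beta> i - \<gamma> i) / mfact (\<lambda>i. \<beta> i - \<gamma> i)))"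
    unfolding div by (simp flip: prod.distrib)
  finally show ?thesis .
qed

lemma sum_midx_mbox_swap:
  "(\<Sum>\<beta>\<in>midx p. \<Sum>\<gamma>\<in>mbox \<beta>. g \<beta> \<gamma>) =
   (\<Sum>\<gamma>\<in>midx p. \<Sum>\<delta>\<in>midx (p - mabs \<gamma>). g (\<lambda>i. \<gamma> i + \<delta> i) \<gamma>)"
proof -
  have "(\<Sum>\<beta>\<in>midx p. \<Sum>\<gamma>\<in>mbox \<beta>. g \<beta> \<gamma>) = (\<Sum>(\<beta>,\<gamma>)\<in>Sigma (midx p) mbox. g \<beta> \<gamma>)"
    by (rule sum.Sigma) (auto simp: finite_midx finite_mbox)
  also have "\<dots> = (\<Sum>(\<gamma>,\<delta>)\<in>Sigma (midx p) (\<lambda>\<gamma>. midx (p - mabs \<gamma>)). g (\<lambda>i. \<gamma> i + \<delta> i) \<gamma>)"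
    apply (rule sum.reindex_bij_witness[where i = "\<lambda>(\<gamma>,\<delta>). (\<lambda>i. \<gamma> i + \<delta> i, \<gamma>)"
                                         and j = "\<lambda>(\<beta>,\<gamma>). (\<gamma>, \<lambda>i. \<beta> i - \<gamma> i)"])
    subgoal by (auto simp: mbox_iff fun_eq_iff)
    subgoal by (auto simp: mbox_iff midx_def mabs_diff) (meson mabs_mono order_trans)
    subgoal by auto
    subgoal by (auto simp: mbox_iff midx_def mabs_add)
    subgoal by (auto simp: mbox_iff fun_eq_iff)
    done
  also have "\<dots> = (\<Sum>\<gamma>\<in>midx p. \<Sum>\<delta>\<in>midx (p - mabs \<gamma>). g (\<lambda>i. \<gamma> i + \<delta> i) \<gamma>)"
    by (rule sum.Sigma[symmetric]) (auto simp: finite_midx)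
  finally show ?thesis .
qed

lemma shifted_monomial_expand:
  "(\<lambda>x. mpow (x - b) \<alpha> / mfact \<alpha>) =
     (\<lambda>x. \<Sum>\<gamma>\<in>mbox \<alpha>. (mpow (- b) (\<lambda>i. \<alpha> i - \<gamma> i) / mfact (\<lambda>i. \<alpha> i - \<gamma> i) / mfact \<gamma>) * mpow x \<gamma>)"
  using mpow_add_div_mfact[of _ "- b" \<alpha>] by (simp add: fun_eq_iff mult.commute)

lemma shifted_monomial_in_polys: "\<alpha> \<in> midx p \<Longrightarrow> (\<lambda>x. mpow (x - b) \<alpha> / mfact \<alpha>) \<in> polys p"
  unfolding shifted_monomial_expand
  by (intro polys_sum) (auto simp: finite_mbox mbox_subset_midx monomial_in_polys)

lemma taylor_eq: "taylor p a F = (\<lambda>x. \<Sum>\<beta>\<in>midx p. mderiv \<beta> F a * (mpow (x - a) \<beta> / mfact \<beta>))"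
  by (simp add: taylor_def fun_eq_iff)

lemma taylor_in_polys: "taylor p a F \<in> polys p"
  unfolding taylor_eq by (intro polys_sum) (auto simp: finite_midx shifted_monomial_in_polys)

lemma taylor_at_centre:
  fixes a :: "real^'n::finite"
  shows "taylor p a F a = F a"
proof -
  have "taylor p a F a = (\<Sum>\<beta>\<in>(midx p :: ('n \<Rightarrow> nat) set). if \<beta> = (\<lambda>_. 0) then F a else 0)"
    unfolding taylor_def by (rule sum.cong) (auto simp: mpow_zero_vec mfact_def)
  thus ?thesis by (simp add: finite_midx)
qed

lemma taylor_0: "taylor 0 a G b = G a"
  by (simp add: taylor_def midx_0 mfact_def mpow_def)

lemma taylor_recentre:
  fixes F :: "real^'n::finite \<Rightarrow> real"
  assumes F: "Ck p F"
  shows "taylor p a F = (\<lambda>x. \<Sum>\<gamma>\<in>midx p. taylor (p - mabs \<gamma>) a (mderiv \<gamma> F) b * (mpow (x - b) \<gamma> / mfact \<gamma>))"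
proof
  fix x
  have coeff: "(\<Sum>\<delta>\<in>midx (p - mabs \<gamma>). mderiv (\<lambda>i. \<gamma> i + \<delta> i) F a / mfact \<delta> * mpow (b - a) \<delta>)
        = taylor (p - mabs \<gamma>) a (mderiv \<gamma> F) b" if \<gamma>: "\<gamma> \<in> midx p" for \<gamma>
    unfolding taylor_def
  proof (rule sum.cong[OF refl])
    fix \<delta> :: "'n \<Rightarrow> nat" assume \<delta>: "\<delta> \<in> midx (p - mabs \<gamma>)"
    have "Ck (mabs \<gamma> + mabs \<delta>) F" using \<gamma> \<delta> by (intro Ck_mono[OF _ F]) (auto simp: midx_def)
    thus "mderiv (\<lambda>i. \<gamma> i + \<delta> i) F a / mfact \<delta> * mpow (b - a) \<delta> =
          mderiv \<delta> (mderiv \<gamma> F) a / mfact \<delta> * mpow (b - a) \<delta>" by (simp add: mderiv_mderiv)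
  qed
  have "taylor p a F x = (\<Sum>\<beta>\<in>midx p. mderiv \<beta> F a * (mpow ((x - b) + (b - a)) \<beta> / mfact \<beta>))"
    by (simp add: taylor_eq)
  also have "\<dots> = (\<Sum>\<beta>\<in>midx p. \<Sum>\<gamma>\<in>mbox \<beta>. mderiv \<beta> F a *
      ((mpow (x - b) \<gamma> / mfact \<gamma>) * (mpow (b - a) (\<lambda>i. \<beta> i - \<gamma> i) / mfact (\<lambda>i. \<beta> i - \<gamma> i))))"
    unfolding mpow_add_div_mfact sum_distrib_left ..
  also have "\<dots> = (\<Sum>\<gamma>\<in>midx p. \<Sum>\<delta>\<in>midx (p - mabs \<gamma>). mderiv (\<lambda>i. \<gamma> i + \<delta> i) F a *
      ((mpow (x - b) \<gamma> / mfact \<gamma>) * (mpow (b - a) \<delta> / mfact \<delta>)))"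
    by (subst sum_midx_mbox_swap) simp
  also have "\<dots> = (\<Sum>\<gamma>\<in>midx p.
     (\<Sum>\<delta>\<in>midx (p - mabs \<gamma>). mderiv (\<lambda>i. \<gamma> i + \<delta> i) F a / mfact \<delta> * mpow (b - a) \<delta>) *
     (mpow (x - b) \<gamma> / mfact \<gamma>))"
    unfolding sum_distrib_right by (intro sum.cong refl) (simp add: field_simps)
  also have "\<dots> = (\<Sum>\<gamma>\<in>midx p. taylor (p - mabs \<gamma>) a (mderiv \<gamma> F) b * (mpow (x - b) \<gamma> / mfact \<gamma>))"
    by (intro sum.cong refl) (simp only: coeff)
  finally show "taylor p a F x = \<dots>" .
qed

lemma dual_taylor_recentre:
  fixes F :: "real^'n::finite \<Rightarrow> real"
  assumes "\<xi> \<in> dual p" "Ck p F"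
  shows "\<xi> (taylor p a F) = (\<Sum>\<gamma>\<in>midx p. taylor (p - mabs \<gamma>) a (mderiv \<gamma> F) b * xi_alpha \<xi> \<gamma> b)"
  unfolding taylor_recentre[OF assms(2), of a b] xi_alpha_def
  by (rule dual_sum[OF assms(1) finite_midx]) (simp add: shifted_monomial_in_polys)

lemma mpow_has_derivative_axis:
  fixes c a :: "real^'n::finite"
  shows "((\<lambda>s. mpow (c + s *\<^sub>R axis j 1 - a) \<delta>) has_real_derivative
          of_nat (\<delta> j) * mpow (c + s0 *\<^sub>R axis j 1 - a) (\<delta>(j := \<delta> j - 1))) (at s0)"
proof -
  define K where "K = (\<Prod>i\<in>UNIV - {j}. (c $ i - a $ i) ^ (\<delta> i))"
  have split: "mpow (c + s *\<^sub>R axis j 1 - a) \<delta>' = (c $ j - a $ j + s) ^ (\<delta>' j) * K"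
    if "\<And>i. i \<noteq> j \<Longrightarrow> \<delta>' i = \<delta> i" for s \<delta>'
  proof -
    have "mpow (c + s *\<^sub>R axis j 1 - a) \<delta>' = (c + s *\<^sub>R axis j 1 - a) $ j ^ \<delta>' j *
           (\<Prod>i\<in>UNIV - {j}. (c + s *\<^sub>R axis j 1 - a) $ i ^ \<delta>' i)"
      unfolding mpow_def by (rule prod.remove) auto
    also have "(\<Prod>i\<in>UNIV - {j}. (c + s *\<^sub>R axis j 1 - a) $ i ^ \<delta>' i) = K"
      unfolding K_def using that by (intro prod.cong) (auto simp: axis_def)
    finally show ?thesis by (simp add: axis_def algebra_simps)
  qed
  have "((\<lambda>s. (c $ j - a $ j + s) ^ (\<delta> j) * K) has_real_derivative
          of_nat (\<delta> j) * ((c $ j - a $ j + s0) ^ (\<delta> j - 1) * K)) (at s0)"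
    by (auto intro!: derivative_eq_intros simp: algebra_simps)
  thus ?thesis by (simp add: split)
qed

lemma mabs_upd: "mabs (\<delta>(j := k)) + \<delta> j = mabs \<delta> + k"
proof -
  have "mabs (\<delta>(j := k)) = k + (\<Sum>i\<in>UNIV - {j}. \<delta> i)"
    unfolding mabs_def by (subst sum.remove[of UNIV j]) (auto intro!: sum.cong)
  moreover have "mabs \<delta> = \<delta> j + (\<Sum>i\<in>UNIV - {j}. \<delta> i)"
    unfolding mabs_def by (subst sum.remove[of UNIV j]) auto
  ultimately show ?thesis by simp
qed

lemma mfact_upd_Suc: "mfact (\<delta>(j := Suc (\<delta> j))) = real (Suc (\<delta> j)) * mfact \<delta>"
proof -
  have "mfact (\<delta>(j := Suc (\<delta> j))) = fact (Suc (\<delta> j)) * (\<Prod>i\<in>UNIV - {j}. fact (\<delta> i))"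
    unfolding mfact_def by (subst prod.remove[of UNIV j]) (auto intro!: prod.cong)
  moreover have "mfact \<delta> = fact (\<delta> j) * (\<Prod>i\<in>UNIV - {j}. fact (\<delta> i))"
    unfolding mfact_def by (subst prod.remove[of UNIV j]) auto
  ultimately show ?thesis by simp
qed

lemma taylor_deriv_reindex:
  fixes a z :: "real^'n::finite"
  assumes G: "Ck (Suc m) G"
  shows "(\<Sum>\<delta>\<in>midx (Suc m). mderiv \<delta> G a / mfact \<delta> * (of_nat (\<delta> j) * mpow z (\<delta>(j := \<delta> j - 1))))
       = taylor m a (pdiff j G) (z + a)"
proof -
  let ?f = "\<lambda>\<delta>. mderiv \<delta> G a / mfact \<delta> * (of_nat (\<delta> j) * mpow z (\<delta>(j := \<delta> j - 1)))"
  define S where "S = {\<delta> \<in> midx (Suc m). \<delta> j \<noteq> 0}"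
  have "(\<Sum>\<delta>\<in>midx (Suc m). ?f \<delta>) = (\<Sum>\<delta>\<in>S. ?f \<delta>)"
    by (rule sum.mono_neutral_right) (auto simp: S_def finite_midx)
  also have "\<dots> = (\<Sum>\<delta>\<in>midx m. ?f (\<delta>(j := \<delta> j + 1)))"
    apply (rule sum.reindex_bij_witness[where i = "\<lambda>\<delta>. \<delta>(j := \<delta> j + 1)" and j = "\<lambda>\<delta>. \<delta>(j := \<delta> j - 1)"])
    subgoal for d by (auto simp: S_def)
    subgoal for d using mabs_upd[of d j "d j - 1"] by (auto simp: S_def midx_def)
    subgoal for d by auto
    subgoal for d using mabs_upd[of d j "d j + 1"] by (auto simp: S_def midx_def)
    subgoal for d by (auto simp: S_def)
    done
  also have "\<dots> = (\<Sum>\<delta>\<in>midx m. mderiv \<delta> (pdiff j G) a / mfact \<delta> * mpow z \<delta>)"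
  proof (rule sum.cong[OF refl])
    fix d :: "'n \<Rightarrow> nat" assume d: "d \<in> midx m"
    have "Ck (Suc (mabs d)) G" using d by (intro Ck_mono[OF _ G]) (auto simp: midx_def)
    hence D: "mderiv (d(j := Suc (d j))) G = mderiv d (pdiff j G)" by (simp add: mderiv_pdiff)
    have cancel: "M / (r * F) * (r * P) = M / F * P" if "r \<noteq> 0" for M r F P :: real
      using that by (cases "F = 0") (simp_all add: field_simps)
    have "?f (d(j := d j + 1))
        = mderiv d (pdiff j G) a / (real (Suc (d j)) * mfact d) * (real (Suc (d j)) * mpow z d)"
      by (simp add: D mfact_upd_Suc)
    also have "\<dots> = mderiv d (pdiff j G) a / mfact d * mpow z d"
      by (rule cancel) simp
    finally show "?f (d(j := d j + 1)) = mderiv d (pdiff j G) a / mfact d * mpow z d" .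
  qed
  also have "\<dots> = taylor m a (pdiff j G) (z + a)" by (simp add: taylor_def)
  finally show ?thesis .
qed

lemma taylor_has_derivative_axis:
  fixes y a :: "real^'n::finite"
  assumes G: "Ck (Suc m) G"
  shows "((\<lambda>s. taylor (Suc m) a G (y + s *\<^sub>R axis j 1)) has_real_derivative
           taylor m a (pdiff j G) (y + s0 *\<^sub>R axis j 1)) (at s0)"
proof -
  have "((\<lambda>s. \<Sum>\<delta>\<in>midx (Suc m). mderiv \<delta> G a / mfact \<delta> * mpow (y + s *\<^sub>R axis j 1 - a) \<delta>) has_real_derivative
     (\<Sum>\<delta>\<in>midx (Suc m). mderiv \<delta> G a / mfact \<delta> *
        (of_nat (\<delta> j) * mpow (y + s0 *\<^sub>R axis j 1 - a) (\<delta>(j := \<delta> j - 1))))) (at s0)"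
    by (intro DERIV_sum DERIV_cmult mpow_has_derivative_axis)
  also have "(\<Sum>\<delta>\<in>midx (Suc m). mderiv \<delta> G a / mfact \<delta> *
        (of_nat (\<delta> j) * mpow (y + s0 *\<^sub>R axis j 1 - a) (\<delta>(j := \<delta> j - 1))))
     = taylor m a (pdiff j G) ((y + s0 *\<^sub>R axis j 1 - a) + a)"
    by (rule taylor_deriv_reindex[OF G])
  finally show ?thesis by (simp add: taylor_def)
qed

subsection \<open>The Taylor remainder is uniformly small\<close>

lemma finite_common_radius:
  fixes a0 :: "'a::metric_space"
  assumes "finite A"
    and "\<And>x. x \<in> A \<Longrightarrow> \<exists>r>0. \<forall>a b. dist a a0 < r \<longrightarrow> dist b a0 < r \<longrightarrow> Q x a b"
  shows "\<exists>r>0. \<forall>x\<in>A. \<forall>a b. dist a a0 < r \<longrightarrow> dist b a0 < r \<longrightarrow> Q x a b"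
  using assms
proof (induction A rule: finite_induct)
  case empty
  show ?case by (rule exI[of _ 1]) simp
next
  case (insert y A)
  obtain r1 where "r1 > 0" "\<forall>a b. dist a a0 < r1 \<longrightarrow> dist b a0 < r1 \<longrightarrow> Q y a b"
    using insert.prems by blast
  moreover obtain r2 where "r2 > 0" "\<forall>x\<in>A. \<forall>a b. dist a a0 < r2 \<longrightarrow> dist b a0 < r2 \<longrightarrow> Q x a b"
    using insert.IH insert.prems by blast
  ultimately show ?case
    by (intro exI[of _ "min r1 r2"]) auto
qed

lemma mvt_abs_le:
  assumes "\<And>s. (\<phi> has_real_derivative \<phi>' s) (at s)"
  shows "\<exists>t. \<bar>t\<bar> \<le> \<bar>h\<bar> \<and> \<phi> h - \<phi> 0 = h * \<phi>' t"
proof (cases h "0::real" rule: linorder_cases)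
  case less
  then obtain z where "h < z" "z < 0" "\<phi> 0 - \<phi> h = (0 - h) * \<phi>' z"
    using MVT2[OF less, of \<phi> \<phi>'] assms by blast
  thus ?thesis by (intro exI[of _ z]) (auto simp: algebra_simps)
next
  case greater
  then obtain z where "0 < z" "z < h" "\<phi> h - \<phi> 0 = (h - 0) * \<phi>' z"
    using MVT2[OF greater, of \<phi> \<phi>'] assms by blast
  thus ?thesis by (intro exI[of _ z]) auto
qed (intro exI[of _ 0], simp)

text \<open>Moving from \<open>a\<close> to \<open>b\<close> one coordinate at a time, the mean value theorem bounds each increment
  of the remainder \<open>G - T\<^sup>m\<^sup>+\<^sup>1\<^sub>a G\<close> by \<open>\<bar>b\<^sub>j - a\<^sub>j\<bar>\<close> times the remainder of \<open>\<partial>\<^sub>j G\<close>, because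
  \<open>\<partial>\<^sub>j T\<^sup>m\<^sup>+\<^sup>1\<^sub>a G = T\<^sup>m\<^sub>a \<partial>\<^sub>j G\<close>.\<close>

lemma taylor_remainder_Suc_bound:
  fixes G :: "real^'n::finite \<Rightarrow> real"
  assumes G: "Ck (Suc m) G" and e: "\<epsilon> \<ge> 0"
    and bound: "\<And>j y. norm (y - a) \<le> norm (b - a) \<Longrightarrow>
                  \<bar>pdiff j G y - taylor m a (pdiff j G) y\<bar> \<le> \<epsilon> * norm (y - a) ^ m"
  shows "\<bar>G b - taylor (Suc m) a G b\<bar> \<le> real CARD('n) * \<epsilon> * norm (b - a) ^ Suc m"
proof -
  let ?N = "norm (b - a)"
  define R where "R = (\<lambda>x. G x - taylor (Suc m) a G x)"
  define c where "c = (\<lambda>S. (\<chi> i. if i \<in> S then b $ i else a $ i) :: real^'n)"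
  have walk: "\<bar>R (c S)\<bar> \<le> real (card S) * \<epsilon> * ?N ^ Suc m" if "finite S" for S
    using that
  proof (induction S rule: finite_induct)
    case empty
    have "c {} = a" by (simp add: c_def vec_eq_iff)
    thus ?case by (simp add: R_def taylor_at_centre)
  next
    case (insert j S)
    let ?u = "axis j (1::real)" and ?h = "b $ j - a $ j"
    define \<phi> where "\<phi> = (\<lambda>s. R (c S + s *\<^sub>R ?u))"
    define \<phi>' where "\<phi>' = (\<lambda>s. pdiff j G (c S + s *\<^sub>R ?u) - taylor m a (pdiff j G) (c S + s *\<^sub>R ?u))"
    have "(\<phi> has_real_derivative \<phi>' s) (at s)" for s
      unfolding \<phi>_def \<phi>'_def R_def
      by (intro DERIV_diff Ck_has_derivative_axis[OF G] taylor_has_derivative_axis[OF G])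
    then obtain t where t: "\<bar>t\<bar> \<le> \<bar>?h\<bar>" "\<phi> ?h - \<phi> 0 = ?h * \<phi>' t"
      using mvt_abs_le by blast
    have y: "norm (c S + t *\<^sub>R ?u - a) \<le> ?N"
      using t(1) insert.hyps by (intro norm_le_componentwise_cart) (auto simp: c_def axis_def)
    have "\<bar>\<phi>' t\<bar> \<le> \<epsilon> * norm (c S + t *\<^sub>R ?u - a) ^ m"
      unfolding \<phi>'_def by (rule bound[OF y])
    also have "\<dots> \<le> \<epsilon> * ?N ^ m"
      using y e by (intro mult_left_mono power_mono) auto
    finally have "\<bar>\<phi>' t\<bar> \<le> \<epsilon> * ?N ^ m" .
    moreover have "\<bar>?h\<bar> \<le> ?N" using component_le_norm_cart[of "b - a" j] by simp
    ultimately have "\<bar>?h * \<phi>' t\<bar> \<le> ?N * (\<epsilon> * ?N ^ m)"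
      unfolding abs_mult by (intro mult_mono) auto
    moreover have "c (insert j S) = c S + ?h *\<^sub>R ?u"
      using insert.hyps by (auto simp: c_def vec_eq_iff axis_def)
    hence "\<phi> 0 = R (c S)" "\<phi> ?h = R (c (insert j S))"
      by (simp_all add: \<phi>_def)
    ultimately have "\<bar>R (c (insert j S))\<bar> \<le> \<bar>R (c S)\<bar> + \<epsilon> * ?N ^ Suc m"
      using t(2) by (simp add: algebra_simps)
    thus ?case using insert by (simp add: algebra_simps)
  qed
  have "c UNIV = b" by (simp add: c_def vec_eq_iff)
  hence "\<bar>R b\<bar> \<le> real CARD('n) * \<epsilon> * ?N ^ Suc m" using walk[of UNIV] by simp
  thus ?thesis by (simp add: R_def)
qed

lemma taylor_remainder_small:
  fixes G :: "real^'n::finite \<Rightarrow> real" and a0 :: "real^'n"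
  shows "Ck m G \<Longrightarrow> \<epsilon> > 0 \<Longrightarrow> \<exists>r>0. \<forall>a b. dist a a0 < r \<longrightarrow> dist b a0 < r \<longrightarrow>
            \<bar>G b - taylor m a G b\<bar> \<le> \<epsilon> * norm (b - a) ^ m"
proof (induction m arbitrary: G \<epsilon>)
  case 0
  have "continuous (at a0) G"
    using Ck_imp_continuous[OF "0.prems"(1)] by (simp add: continuous_on_eq_continuous_at)
  then obtain d where d: "d > 0" "\<forall>y. dist y a0 < d \<longrightarrow> dist (G y) (G a0) < \<epsilon> / 2"
    using "0.prems"(2) unfolding continuous_at_eps_delta by (metis half_gt_zero)
  show ?case
  proof (intro exI[of _ d] conjI allI impI)
    fix a b assume "dist a a0 < d" "dist b a0 < d"
    hence "\<bar>G a - G a0\<bar> < \<epsilon> / 2" "\<bar>G b - G a0\<bar> < \<epsilon> / 2" using d by (auto simp: dist_real_def)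
    moreover have "\<bar>G b - G a\<bar> \<le> \<bar>G b - G a0\<bar> + \<bar>G a - G a0\<bar>"
      using abs_triangle_ineq4[of "G b - G a0" "G a - G a0"] by simp
    ultimately show "\<bar>G b - taylor 0 a G b\<bar> \<le> \<epsilon> * norm (b - a) ^ 0"
      by (simp add: taylor_0)
  qed (rule d)
next
  case (Suc m)
  define \<epsilon>' where "\<epsilon>' = \<epsilon> / real CARD('n)"
  have e': "\<epsilon>' > 0" using Suc.prems by (simp add: \<epsilon>'_def)
  have G: "Ck (Suc m) G" by (rule Suc.prems(1))
  have "\<exists>r>0. \<forall>a b. dist a a0 < r \<longrightarrow> dist b a0 < r \<longrightarrow>
            \<bar>pdiff j G b - taylor m a (pdiff j G) b\<bar> \<le> \<epsilon>' * norm (b - a) ^ m" for j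
    using G e' by (intro Suc.IH) auto
  hence "\<exists>r>0. \<forall>j\<in>UNIV. \<forall>a b. dist a a0 < r \<longrightarrow> dist b a0 < r \<longrightarrow>
            \<bar>pdiff j G b - taylor m a (pdiff j G) b\<bar> \<le> \<epsilon>' * norm (b - a) ^ m"
    by (intro finite_common_radius) simp_all
  then obtain r where r: "r > 0" "\<forall>j\<in>UNIV. \<forall>a b. dist a a0 < r \<longrightarrow> dist b a0 < r \<longrightarrow>
            \<bar>pdiff j G b - taylor m a (pdiff j G) b\<bar> \<le> \<epsilon>' * norm (b - a) ^ m"
    by blast
  show ?case
  proof (intro exI[of _ "r / 3"] conjI allI impI)
    fix a b :: "real^'n" assume a: "dist a a0 < r / 3" and b: "dist b a0 < r / 3"
    have ba: "norm (b - a) < 2 * r / 3"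
      using a b dist_triangle2[of b a a0] by (simp add: dist_norm)
    have "\<bar>pdiff j G y - taylor m a (pdiff j G) y\<bar> \<le> \<epsilon>' * norm (y - a) ^ m"
      if y: "norm (y - a) \<le> norm (b - a)" for j y
    proof -
      have "dist y a0 \<le> norm (y - a) + dist a a0"
        using dist_triangle[of y a0 a] by (simp add: dist_norm)
      hence "dist y a0 < r" using y ba a by linarith
      moreover have "dist a a0 < r" using a r(1) by linarith
      ultimately show ?thesis using r(2) by blast
    qed
    hence "\<bar>G b - taylor (Suc m) a G b\<bar> \<le> real CARD('n) * \<epsilon>' * norm (b - a) ^ Suc m"
      using e' by (intro taylor_remainder_Suc_bound[OF G]) auto
    thus "\<bar>G b - taylor (Suc m) a G b\<bar> \<le> \<epsilon> * norm (b - a) ^ Suc m"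
      by (simp add: \<epsilon>'_def)
  qed (use r(1) in linarith)
qed

text \<open>The value \<open>\<xi>(T\<^sup>p\<^sub>a F)\<close> in terms of \<open>a\<close> and the monomial coordinates \<open>c = coord p \<xi>\<close>, obtained by
  expanding each \<open>(x - a)\<^sup>\<beta>/\<beta>!\<close> binomially.\<close>

definition taylor_pairing :: "nat \<Rightarrow> ((real^'n::finite) \<Rightarrow> real) \<Rightarrow> real^'n \<Rightarrow> (('n \<Rightarrow> nat) \<Rightarrow> real) \<Rightarrow> real" where
  "taylor_pairing p F a c = (\<Sum>\<beta>\<in>midx p. mderiv \<beta> F a *
      (\<Sum>\<gamma>\<in>mbox \<beta>. (mpow (- a) (\<lambda>i. \<beta> i - \<gamma> i) / mfact (\<lambda>i. \<beta> i - \<gamma> i) / mfact \<gamma>) * c \<gamma>))"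

lemma dual_taylor_eq_pairing: "\<xi> \<in> dual p \<Longrightarrow> \<xi> (taylor p a F) = taylor_pairing p F a (coord p \<xi>)"
proof -
  assume \<xi>: "\<xi> \<in> dual p"
  have "\<xi> (\<lambda>x. mpow (x - a) \<beta> / mfact \<beta>) =
      (\<Sum>\<gamma>\<in>mbox \<beta>. (mpow (- a) (\<lambda>i. \<beta> i - \<gamma> i) / mfact (\<lambda>i. \<beta> i - \<gamma> i) / mfact \<gamma>) * coord p \<xi> \<gamma>)"
    if "\<beta> \<in> midx p" for \<beta>
    unfolding shifted_monomial_expand
    using \<xi> that by (subst dual_sum) (auto simp: finite_mbox mbox_subset_midx monomial_in_polys coord_def)
  thus ?thesis
    unfolding taylor_eq taylor_pairing_def
    using \<xi> by (subst dual_sum) (auto simp: finite_midx shifted_monomial_in_polys)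
qed

lemma isCont_taylor_pairing:
  fixes F :: "real^'n::finite \<Rightarrow> real"
  assumes F: "Ck p F"
  shows "isCont (\<lambda>(a, c). taylor_pairing p F a c) (a0, c0)"
proof -
  have "isCont (mderiv \<beta> F) a0" if "\<beta> \<in> midx p" for \<beta>
  proof -
    have "Ck (p - mabs \<beta>) (mderiv \<beta> F)" using that F by (intro Ck_mderiv) (auto simp: midx_def)
    hence "continuous_on UNIV (mderiv \<beta> F)" by (rule Ck_imp_continuous)
    thus ?thesis by (simp add: continuous_on_eq_continuous_at)
  qed
  moreover have "isCont (\<lambda>c::('n \<Rightarrow> nat) \<Rightarrow> real. c \<gamma>) c0" for \<gamma>
    using continuous_on_eq_continuous_at[OF open_UNIV, of "\<lambda>c::('n \<Rightarrow> nat) \<Rightarrow> real. c \<gamma>"] by simp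
  ultimately show ?thesis
    unfolding taylor_pairing_def case_prod_beta mpow_def
    by (intro continuous_intros isCont_o2[where f = fst] isCont_o2[where f = snd]) auto
qed

definition delta_bound :: "nat \<Rightarrow> real^'n::finite \<Rightarrow> real^'n \<Rightarrow> (((real^'n) \<Rightarrow> real) \<Rightarrow> real) \<Rightarrow> bool" where
  "delta_bound p a b \<eta> \<longleftrightarrow> (\<forall>\<alpha>\<in>midx p. norm (a - b) ^ (p - mabs \<alpha>) * \<bar>xi_alpha \<eta> \<alpha> b\<bar> \<le> 1)"

text \<open>Writing both Taylor polynomials around \<open>b\<close>, \<open>\<eta>(T\<^sub>b F) - \<eta>(T\<^sub>a F)\<close> is the sum over \<open>\<gamma>\<close> of the
  remainders \<open>D\<^sup>\<gamma>F(b) - T\<^sup>p\<^sup>-\<^sup>|\<^sup>\<gamma>\<^sup>|\<^sub>a D\<^sup>\<gamma>F(b) = o(\<bar>a - b\<bar>\<^sup>p\<^sup>-\<^sup>|\<^sup>\<gamma>\<^sup>|)\<close> times \<open>\<eta>\<^sub>\<gamma>(b)\<close>, and \<open>delta_bound\<close> makes each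
  product small.\<close>

lemma taylor_increment_small:
  fixes F :: "real^'n::finite \<Rightarrow> real" and a0 :: "real^'n"
  assumes F: "Ck p F" and e: "\<epsilon> > 0"
  shows "\<exists>r>0. \<forall>a b \<eta>. dist a a0 < r \<longrightarrow> dist b a0 < r \<longrightarrow> \<eta> \<in> dual p \<longrightarrow> delta_bound p a b \<eta> \<longrightarrow>
           \<bar>\<eta> (taylor p b F) - \<eta> (taylor p a F)\<bar> \<le> \<epsilon>"
proof -
  define K where "K = card (midx p :: ('n \<Rightarrow> nat) set)"
  have K: "K > 0" unfolding K_def using finite_midx zero_in_midx by (metis card_gt_0_iff empty_iff)
  define e' where "e' = \<epsilon> / real K"
  have e': "e' > 0" using e K by (simp add: e'_def)
  let ?rem = "\<lambda>\<gamma> a b. mderiv \<gamma> F b - taylor (p - mabs \<gamma>) a (mderiv \<gamma> F) b"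
  have "\<exists>r>0. \<forall>a b. dist a a0 < r \<longrightarrow> dist b a0 < r \<longrightarrow> \<bar>?rem \<gamma> a b\<bar> \<le> e' * norm (b - a) ^ (p - mabs \<gamma>)"
    if "\<gamma> \<in> midx p" for \<gamma>
    using that F e' by (intro taylor_remainder_small Ck_mderiv) (auto simp: midx_def)
  hence "\<exists>r>0. \<forall>\<gamma>\<in>midx p. \<forall>a b. dist a a0 < r \<longrightarrow> dist b a0 < r \<longrightarrow>
      \<bar>?rem \<gamma> a b\<bar> \<le> e' * norm (b - a) ^ (p - mabs \<gamma>)"
    by (intro finite_common_radius[OF finite_midx])
  then obtain r where r: "r > 0" "\<forall>\<gamma>\<in>midx p. \<forall>a b. dist a a0 < r \<longrightarrow> dist b a0 < r \<longrightarrow>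
      \<bar>?rem \<gamma> a b\<bar> \<le> e' * norm (b - a) ^ (p - mabs \<gamma>)"
    by blast
  show ?thesis
  proof (intro exI[of _ r] conjI allI impI)
    fix a b :: "real^'n" and \<eta>
    assume a: "dist a a0 < r" and b: "dist b a0 < r" and \<eta>: "\<eta> \<in> dual p"
      and bd: "delta_bound p a b \<eta>"
    have "\<eta> (taylor p b F) - \<eta> (taylor p a F) = (\<Sum>\<gamma>\<in>midx p. ?rem \<gamma> a b * xi_alpha \<eta> \<gamma> b)"
      unfolding dual_taylor_recentre[OF \<eta> F, of b b] dual_taylor_recentre[OF \<eta> F, of a b]
      by (simp add: taylor_at_centre sum_subtractf left_diff_distrib)
    also have "\<bar>\<dots>\<bar> \<le> (\<Sum>\<gamma>\<in>(midx p :: ('n \<Rightarrow> nat) set). e')"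
    proof (rule order_trans[OF sum_abs sum_mono])
      fix \<gamma> :: "'n \<Rightarrow> nat" assume \<gamma>: "\<gamma> \<in> midx p"
      have "\<bar>?rem \<gamma> a b * xi_alpha \<eta> \<gamma> b\<bar> \<le> e' * norm (b - a) ^ (p - mabs \<gamma>) * \<bar>xi_alpha \<eta> \<gamma> b\<bar>"
        unfolding abs_mult using r(2) \<gamma> a b by (intro mult_right_mono) auto
      also have "\<dots> = e' * (norm (a - b) ^ (p - mabs \<gamma>) * \<bar>xi_alpha \<eta> \<gamma> b\<bar>)"
        by (simp add: norm_minus_commute)
      also have "\<dots> \<le> e'"
        using bd \<gamma> e' mult_left_mono[of _ 1 e'] by (auto simp: delta_bound_def)
      finally show "\<bar>?rem \<gamma> a b * xi_alpha \<eta> \<gamma> b\<bar> \<le> e'" .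
    qed
    also have "\<dots> = \<epsilon>" using K by (simp add: e'_def K_def)
    finally show "\<bar>\<eta> (taylor p b F) - \<eta> (taylor p a F)\<bar> \<le> \<epsilon>" .
  qed (rule r)
qed

subsection \<open>Closures of sets close to a continuous graph\<close>

lemma deviation_tendsto_zero:
  fixes a0 :: "'a::metric_space" and \<psi> :: "'a \<Rightarrow> 'c \<Rightarrow> real"
  assumes small: "\<And>e. e > 0 \<Longrightarrow> \<exists>r>0. \<forall>a b c m. (a, b, c, m) \<in> S \<longrightarrow>
                     dist a a0 < r \<longrightarrow> dist b a0 < r \<longrightarrow> \<bar>m - \<psi> a c\<bar> \<le> e"
    and S: "\<And>n. (A n, B n, C n, M n) \<in> S" and A: "A \<longlonglongrightarrow> a0" and B: "B \<longlonglongrightarrow> a0"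
  shows "(\<lambda>n. M n - \<psi> (A n) (C n)) \<longlonglongrightarrow> 0"
proof (rule tendstoI)
  fix e :: real assume "e > 0"
  then obtain r where r: "r > 0" "\<forall>a b c m. (a, b, c, m) \<in> S \<longrightarrow>
      dist a a0 < r \<longrightarrow> dist b a0 < r \<longrightarrow> \<bar>m - \<psi> a c\<bar> \<le> e / 2"
    using small[of "e / 2"] by auto
  have "eventually (\<lambda>n. dist (A n) a0 < r) sequentially" "eventually (\<lambda>n. dist (B n) a0 < r) sequentially"
    using tendstoD[OF A r(1)] tendstoD[OF B r(1)] .
  thus "eventually (\<lambda>n. dist (M n - \<psi> (A n) (C n)) 0 < e) sequentially"
  proof eventually_elim
    case (elim n)
    thus ?case using r(2) S[of n] \<open>e > 0\<close> by force
  qed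
qed

lemma closure_deviation_unique:
  fixes a0 :: "'a::metric_space" and c0 :: "'c::{first_countable_topology, t2_space}"
    and \<psi> :: "'a \<Rightarrow> 'c \<Rightarrow> real"
  assumes cont: "isCont (\<lambda>(a, c). \<psi> a c) (a0, c0)"
    and small: "\<And>e. e > 0 \<Longrightarrow> \<exists>r>0. \<forall>a b c m. (a, b, c, m) \<in> S \<longrightarrow>
                     dist a a0 < r \<longrightarrow> dist b a0 < r \<longrightarrow> \<bar>m - \<psi> a c\<bar> \<le> e"
    and l: "(a0, a0, c0, l) \<in> closure S"
  shows "l = \<psi> a0 c0"
proof -
  obtain z where z: "\<And>n. z n \<in> S" "z \<longlonglongrightarrow> (a0, a0, c0, l)"
    using l unfolding closure_sequential by blast
  define A where "A = (\<lambda>n. fst (z n))"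
  define B where "B = (\<lambda>n. fst (snd (z n)))"
  define C where "C = (\<lambda>n. fst (snd (snd (z n))))"
  define M where "M = (\<lambda>n. snd (snd (snd (z n))))"
  have S: "(A n, B n, C n, M n) \<in> S" for n using z(1)[of n] by (simp add: A_def B_def C_def M_def)
  have A: "A \<longlonglongrightarrow> a0" using tendsto_fst[OF z(2)] by (simp add: A_def)
  have B: "B \<longlonglongrightarrow> a0" using tendsto_fst[OF tendsto_snd[OF z(2)]] by (simp add: B_def)
  have C: "C \<longlonglongrightarrow> c0" using tendsto_fst[OF tendsto_snd[OF tendsto_snd[OF z(2)]]] by (simp add: C_def)
  have M: "M \<longlonglongrightarrow> l" using tendsto_snd[OF tendsto_snd[OF tendsto_snd[OF z(2)]]] by (simp add: M_def)
  have "(\<lambda>n. \<psi> (A n) (C n)) \<longlonglongrightarrow> \<psi> a0 c0"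
    using isCont_tendsto_compose[OF cont tendsto_Pair[OF A C]] by simp
  hence "(\<lambda>n. M n - \<psi> (A n) (C n)) \<longlonglongrightarrow> l - \<psi> a0 c0"
    by (intro tendsto_diff M)
  with deviation_tendsto_zero[OF small S A B] show ?thesis
    using LIMSEQ_unique by fastforce
qed

lemma closure_deviation_lift:
  fixes a0 :: "'a::metric_space" and c0 :: "'c::{first_countable_topology, t2_space}"
    and \<psi> :: "'a \<Rightarrow> 'c \<Rightarrow> real"
  assumes cont: "isCont (\<lambda>(a, c). \<psi> a c) (a0, c0)"
    and small: "\<And>e. e > 0 \<Longrightarrow> \<exists>r>0. \<forall>a b c m. (a, b, c, m) \<in> S \<longrightarrow>
                     dist a a0 < r \<longrightarrow> dist b a0 < r \<longrightarrow> \<bar>m - \<psi> a c\<bar> \<le> e"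
    and x0: "(a0, a0, c0) \<in> closure ((\<lambda>(a, b, c, m). (a, b, c)) ` S)"
  shows "(a0, a0, c0, \<psi> a0 c0) \<in> closure S"
proof -
  obtain x where x: "\<And>n. x n \<in> (\<lambda>(a, b, c, m). (a, b, c)) ` S" "x \<longlonglongrightarrow> (a0, a0, c0)"
    using x0 unfolding closure_sequential by blast
  define A where "A = (\<lambda>n. fst (x n))"
  define B where "B = (\<lambda>n. fst (snd (x n)))"
  define C where "C = (\<lambda>n. snd (snd (x n)))"
  have "\<exists>m. (A n, B n, C n, m) \<in> S" for n
    using x(1)[of n] unfolding A_def B_def C_def by auto
  then obtain M where S: "\<And>n. (A n, B n, C n, M n) \<in> S" by metis
  have A: "A \<longlonglongrightarrow> a0" using tendsto_fst[OF x(2)] by (simp add: A_def)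
  have B: "B \<longlonglongrightarrow> a0" using tendsto_fst[OF tendsto_snd[OF x(2)]] by (simp add: B_def)
  have C: "C \<longlonglongrightarrow> c0" using tendsto_snd[OF tendsto_snd[OF x(2)]] by (simp add: C_def)
  have "(\<lambda>n. \<psi> (A n) (C n)) \<longlonglongrightarrow> \<psi> a0 c0"
    using isCont_tendsto_compose[OF cont tendsto_Pair[OF A C]] by simp
  hence "(\<lambda>n. (M n - \<psi> (A n) (C n)) + \<psi> (A n) (C n)) \<longlonglongrightarrow> 0 + \<psi> a0 c0"
    by (intro tendsto_add deviation_tendsto_zero[OF small S A B])
  hence "(\<lambda>n. (A n, B n, C n, M n)) \<longlonglongrightarrow> (a0, a0, c0, \<psi> a0 c0)"
    by (intro tendsto_Pair A B C) simp
  thus ?thesis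
    using S by (auto simp: closure_sequential intro!: exI[of _ "\<lambda>n. (A n, B n, C n, M n)"])
qed

subsection \<open>The bundles over the graph of Taylor polynomials\<close>

definition taylor_graph :: "nat \<Rightarrow> (real^'n::finite) set \<Rightarrow> ((real^'n) \<Rightarrow> real)
     \<Rightarrow> ((real^'n) \<times> (((real^'n) \<Rightarrow> real) \<Rightarrow> real) \<times> real) set" where
  "taylor_graph p X F = {(a, \<xi>, l). a \<in> X \<and> \<xi> \<in> dual p \<and> l = \<xi> (taylor p a F)}"

lemma Delta_Phi_image_memI:
  assumes "a \<in> X" "b \<in> X" "(a, \<xi>, l) \<in> \<Phi>" "(b, \<eta>, m) \<in> \<Phi>" "delta_bound p a b \<eta>"
  shows "(a, b, coord p (\<lambda>P. \<xi> P + \<eta> P), l + m) \<in> (\<lambda>(a, b, \<eta>, m). (a, b, coord p \<eta>, m)) ` Delta_Phi p X \<Phi>"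
proof (rule image_eqI)
  show "(a, b, \<lambda>P. \<xi> P + \<eta> P, l + m) \<in> Delta_Phi p X \<Phi>"
    using assms unfolding Delta_Phi_def delta_bound_def by blast
qed simp

lemma Delta_Phi_image_memE:
  assumes "(a, b, c, m) \<in> (\<lambda>(a, b, \<eta>, m). (a, b, coord p \<eta>, m)) ` Delta_Phi p X \<Phi>"
  obtains \<xi> l \<eta> m' where "a \<in> X" "b \<in> X" "c = coord p (\<lambda>P. \<xi> P + \<eta> P)" "m = l + m'"
    "(a, \<xi>, l) \<in> \<Phi>" "(b, \<eta>, m') \<in> \<Phi>" "delta_bound p a b \<eta>"
proof -
  obtain z where z: "z \<in> Delta_Phi p X \<Phi>" "(a, b, c, m) = (\<lambda>(a, b, \<eta>, m). (a, b, coord p \<eta>, m)) z"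
    using assms by (rule imageE)
  from z(1) obtain a' b' \<xi> l \<eta> m' where "z = (a', b', \<lambda>P. \<xi> P + \<eta> P, l + m')" "a' \<in> X" "b' \<in> X"
    "(a', \<xi>, l) \<in> \<Phi>" "(b', \<eta>, m') \<in> \<Phi>" "delta_bound p a' b' \<eta>"
    unfolding Delta_Phi_def delta_bound_def by blast
  with z(2) show thesis using that by simp
qed

lemma Delta_E_image_memE:
  assumes "x \<in> (\<lambda>(a, b, \<eta>). (a, b, coord p \<eta>)) ` Delta_E p X E"
  obtains a b \<xi> \<eta> where "x = (a, b, coord p (\<lambda>P. \<xi> P + \<eta> P))" "a \<in> X" "b \<in> X"
    "(a, \<xi>) \<in> E" "(b, \<eta>) \<in> E" "delta_bound p a b \<eta>"
proof -
  obtain z where z: "z \<in> Delta_E p X E" "x = (\<lambda>(a, b, \<eta>). (a, b, coord p \<eta>)) z"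
    using assms by (rule imageE)
  from z(1) obtain a b \<xi> \<eta> where "z = (a, b, \<lambda>P. \<xi> P + \<eta> P)" "a \<in> X" "b \<in> X"
    "(a, \<xi>) \<in> E" "(b, \<eta>) \<in> E" "delta_bound p a b \<eta>"
    unfolding Delta_E_def delta_bound_def by blast
  with z(2) show thesis using that by simp
qed

lemma Delta_Phi_deviation_small:
  fixes F :: "real^'n::finite \<Rightarrow> real"
  assumes F: "Ck p F" and \<Phi>: "\<Phi> \<subseteq> taylor_graph p X F" and e: "e > 0"
  shows "\<exists>r>0. \<forall>a b c m. (a, b, c, m) \<in> (\<lambda>(a, b, \<eta>, m). (a, b, coord p \<eta>, m)) ` Delta_Phi p X \<Phi> \<longrightarrow>
           dist a a0 < r \<longrightarrow> dist b a0 < r \<longrightarrow> \<bar>m - taylor_pairing p F a c\<bar> \<le> e"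
proof -
  obtain r where r: "r > 0" "\<forall>a b \<eta>. dist a a0 < r \<longrightarrow> dist b a0 < r \<longrightarrow> \<eta> \<in> dual p \<longrightarrow>
      delta_bound p a b \<eta> \<longrightarrow> \<bar>\<eta> (taylor p b F) - \<eta> (taylor p a F)\<bar> \<le> e"
    using taylor_increment_small[OF F e] by blast
  have "\<bar>m - taylor_pairing p F a c\<bar> \<le> e"
    if z: "(a, b, c, m) \<in> (\<lambda>(a, b, \<eta>, m). (a, b, coord p \<eta>, m)) ` Delta_Phi p X \<Phi>"
      and a: "dist a a0 < r" and b: "dist b a0 < r" for a b c m
  proof -
    obtain \<xi> l \<eta> m' where mem: "c = coord p (\<lambda>P. \<xi> P + \<eta> P)" "m = l + m'"
      "(a, \<xi>, l) \<in> \<Phi>" "(b, \<eta>, m') \<in> \<Phi>" "delta_bound p a b \<eta>"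
      using z by (rule Delta_Phi_image_memE)
    have \<xi>: "\<xi> \<in> dual p" "l = \<xi> (taylor p a F)" and \<eta>: "\<eta> \<in> dual p" "m' = \<eta> (taylor p b F)"
      using mem(3,4) \<Phi> by (auto simp: taylor_graph_def)
    have "taylor_pairing p F a c = \<xi> (taylor p a F) + \<eta> (taylor p a F)"
      using dual_taylor_eq_pairing[OF dual_plus[OF \<xi>(1) \<eta>(1)]] mem(1) by simp
    thus ?thesis using r(2) a b \<eta> mem(2,5) \<xi>(2) by simp
  qed
  thus ?thesis using r(1) by blast
qed

lemma Phiprime_subset_graph:
  fixes F :: "real^'n::finite \<Rightarrow> real"
  assumes F: "Ck p F" and \<Phi>: "\<Phi> \<subseteq> taylor_graph p X F"
  shows "Phiprime p X \<Phi> \<subseteq> taylor_graph p X F"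
proof
  fix w assume "w \<in> Phiprime p X \<Phi>"
  then obtain a \<xi> l where w: "w = (a, \<xi>, l)" "a \<in> X" "\<xi> \<in> dual p"
    and cl: "(a, a, coord p \<xi>, l) \<in> closure ((\<lambda>(a, b, \<eta>, m). (a, b, coord p \<eta>, m)) ` Delta_Phi p X \<Phi>)"
    unfolding Phiprime_def by blast
  have "l = taylor_pairing p F a (coord p \<xi>)"
    using closure_deviation_unique[OF isCont_taylor_pairing[OF F] Delta_Phi_deviation_small[OF F \<Phi>] cl]
    by blast
  thus "w \<in> taylor_graph p X F"
    using w dual_taylor_eq_pairing[OF w(3)] by (simp add: taylor_graph_def)
qed

lemma rhoPhi_subset_graph:
  fixes F :: "real^'n::finite \<Rightarrow> real"
  assumes F: "Ck p F" and \<Phi>: "\<Phi> \<subseteq> taylor_graph p X F"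
  shows "rhoPhi p X \<Phi> \<subseteq> taylor_graph p X F"
proof
  fix w assume "w \<in> rhoPhi p X \<Phi>"
  then obtain a T c where w: "w = (a, (\<lambda>P. \<Sum>v\<in>T. c v * fst v P), (\<Sum>v\<in>T. c v * snd v))" "a \<in> X"
    and T: "finite T" "T \<subseteq> {v. (a, v) \<in> Phiprime p X \<Phi>}"
    unfolding rhoPhi_def lspan2_def by blast
  have v: "fst v \<in> dual p" "snd v = fst v (taylor p a F)" if "v \<in> T" for v
    using that T(2) Phiprime_subset_graph[OF F \<Phi>] by (auto simp: taylor_graph_def)
  thus "w \<in> taylor_graph p X F"
    using w T(1) by (simp add: taylor_graph_def dual_lincomb)
qed

lemma Eprime_lift:
  fixes F :: "real^'n::finite \<Rightarrow> real"
  assumes F: "Ck p F" and \<Phi>: "\<Phi> \<subseteq> taylor_graph p X F"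
    and lift: "\<And>a \<xi>. (a, \<xi>) \<in> E \<Longrightarrow> (a, \<xi>, \<xi> (taylor p a F)) \<in> \<Phi>"
    and a\<xi>: "(a, \<xi>) \<in> Eprime p X E"
  shows "(a, \<xi>, \<xi> (taylor p a F)) \<in> Phiprime p X \<Phi>"
proof -
  let ?SP = "(\<lambda>(a, b, \<eta>, m). (a, b, coord p \<eta>, m)) ` Delta_Phi p X \<Phi>"
  have a: "a \<in> X" and \<xi>: "\<xi> \<in> dual p"
    and cl: "(a, a, coord p \<xi>) \<in> closure ((\<lambda>(a, b, \<eta>). (a, b, coord p \<eta>)) ` Delta_E p X E)"
    using a\<xi> unfolding Eprime_def by auto
  have "(\<lambda>(a, b, \<eta>). (a, b, coord p \<eta>)) ` Delta_E p X E \<subseteq> (\<lambda>(a, b, c, m). (a, b, c)) ` ?SP"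
  proof
    fix x assume "x \<in> (\<lambda>(a, b, \<eta>). (a, b, coord p \<eta>)) ` Delta_E p X E"
    then obtain a b \<xi> \<eta> where x: "x = (a, b, coord p (\<lambda>P. \<xi> P + \<eta> P))" and
      "a \<in> X" "b \<in> X" "(a, \<xi>) \<in> E" "(b, \<eta>) \<in> E" "delta_bound p a b \<eta>"
      by (rule Delta_E_image_memE)
    hence "(a, b, coord p (\<lambda>P. \<xi> P + \<eta> P), \<xi> (taylor p a F) + \<eta> (taylor p b F)) \<in> ?SP"
      using lift by (intro Delta_Phi_image_memI)
    thus "x \<in> (\<lambda>(a, b, c, m). (a, b, c)) ` ?SP"
      unfolding x by (rule rev_image_eqI) simp
  qed
  hence "(a, a, coord p \<xi>) \<in> closure ((\<lambda>(a, b, c, m). (a, b, c)) ` ?SP)"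
    using cl closure_mono by blast
  from closure_deviation_lift[OF isCont_taylor_pairing[OF F] Delta_Phi_deviation_small[OF F \<Phi>] this]
  have "(a, a, coord p \<xi>, taylor_pairing p F a (coord p \<xi>)) \<in> closure ?SP" .
  thus ?thesis
    unfolding Phiprime_def using a \<xi> dual_taylor_eq_pairing[OF \<xi>] by simp
qed

lemma rho_lift:
  fixes F :: "real^'n::finite \<Rightarrow> real"
  assumes F: "Ck p F" and \<Phi>: "\<Phi> \<subseteq> taylor_graph p X F"
    and lift: "\<And>a \<xi>. (a, \<xi>) \<in> E \<Longrightarrow> (a, \<xi>, \<xi> (taylor p a F)) \<in> \<Phi>"
    and a\<xi>: "(a, \<xi>) \<in> rho p X E"
  shows "(a, \<xi>, \<xi> (taylor p a F)) \<in> rhoPhi p X \<Phi>"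
proof -
  obtain T c where a: "a \<in> X" and T: "finite T" "T \<subseteq> {\<eta>. (a, \<eta>) \<in> Eprime p X E}"
    and \<xi>: "\<xi> = (\<lambda>P. \<Sum>\<eta>\<in>T. c \<eta> * \<eta> P)"
    using a\<xi> unfolding rho_def lspan_def by blast
  define T' where "T' = (\<lambda>\<eta>. (\<eta>, \<eta> (taylor p a F))) ` T"
  have inj: "inj_on (\<lambda>\<eta>. (\<eta>, \<eta> (taylor p a F))) T" by (auto simp: inj_on_def)
  have "finite T'" "T' \<subseteq> {w. (a, w) \<in> Phiprime p X \<Phi>}"
    using T Eprime_lift[OF F \<Phi> lift] by (auto simp: T'_def)
  moreover have "(\<xi>, \<xi> (taylor p a F)) = ((\<lambda>P. \<Sum>v\<in>T'. c (fst v) * fst v P), (\<Sum>v\<in>T'. c (fst v) * snd v))"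
    unfolding T'_def \<xi> by (simp add: sum.reindex[OF inj])
  ultimately have "(\<xi>, \<xi> (taylor p a F)) \<in> lspan2 {w. (a, w) \<in> Phiprime p X \<Phi>}"
    unfolding lspan2_def by (intro CollectI exI[of _ T'] exI[of _ "\<lambda>v. c (fst v)"]) blast
  thus ?thesis unfolding rhoPhi_def using a by simp
qed

lemma rhoPhi_inflationary:
  assumes "\<And>a \<xi> l. (a, \<xi>, l) \<in> \<Phi> \<Longrightarrow> a \<in> X \<and> \<xi> \<in> dual p"
    and "\<And>a. a \<in> X \<Longrightarrow> (a, \<lambda>P. 0, 0) \<in> \<Phi>"
  shows "\<Phi> \<subseteq> rhoPhi p X \<Phi>"
proof clarify
  fix a \<xi> l assume w: "(a, \<xi>, l) \<in> \<Phi>"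
  have a: "a \<in> X" and \<xi>: "\<xi> \<in> dual p" using assms(1)[OF w] by auto
  have "delta_bound p a a (\<lambda>P. 0)"
    by (simp add: delta_bound_def xi_alpha_def)
  hence "(a, a, coord p (\<lambda>P. \<xi> P + 0), l + 0) \<in> (\<lambda>(a, b, \<eta>, m). (a, b, coord p \<eta>, m)) ` Delta_Phi p X \<Phi>"
    using a w assms(2)[OF a] by (intro Delta_Phi_image_memI)
  hence "(a, a, coord p \<xi>, l) \<in> closure ((\<lambda>(a, b, \<eta>, m). (a, b, coord p \<eta>, m)) ` Delta_Phi p X \<Phi>)"
    by (simp add: closure_subset[THEN subsetD])
  hence "(a, \<xi>, l) \<in> Phiprime p X \<Phi>"
    unfolding Phiprime_def using a \<xi> by simp
  hence "(\<xi>, l) \<in> lspan2 {w. (a, w) \<in> Phiprime p X \<Phi>}"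
    unfolding lspan2_def by (intro CollectI exI[of _ "{(\<xi>, l)}"] exI[of _ "\<lambda>_. 1"]) simp
  thus "(a, \<xi>, l) \<in> rhoPhi p X \<Phi>" unfolding rhoPhi_def using a by simp
qed

lemma zero_in_rhoPhi_power: "a \<in> X \<Longrightarrow> (a, \<lambda>P. 0, 0) \<in> (rhoPhi p X ^^ k) (Phi0 p X f)"
proof (cases k)
  case 0
  assume a: "a \<in> X"
  have "(a, \<lambda>P. 0 * delta p a P, 0 * f a) \<in> Phi0 p X f" unfolding Phi0_def using a by blast
  thus ?thesis using 0 by simp
next
  case (Suc j)
  assume "a \<in> X"
  moreover have "((\<lambda>P. 0), 0) \<in> lspan2 S" for S :: "((((real^'n) \<Rightarrow> real) \<Rightarrow> real) \<times> real) set"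
    unfolding lspan2_def by (intro CollectI exI[of _ "{}"]) simp
  ultimately show ?thesis using Suc by (simp add: rhoPhi_def)
qed

lemma rhoPhi_power_subset_graph:
  fixes F :: "real^'n::finite \<Rightarrow> real"
  assumes F: "Ck p F" and Ff: "\<forall>x\<in>X. F x = f x"
  shows "(rhoPhi p X ^^ k) (Phi0 p X f) \<subseteq> taylor_graph p X F"
proof (induction k)
  case 0
  have "delta p a (taylor p a F) = f a" if "a \<in> X" for a
    using that Ff by (simp add: delta_def taylor_in_polys taylor_at_centre)
  thus ?case by (auto simp: Phi0_def taylor_graph_def delta_in_dual)
qed (simp add: rhoPhi_subset_graph[OF F])

lemma rho_power_lift:
  fixes F :: "real^'n::finite \<Rightarrow> real"
  assumes F: "Ck p F" and Ff: "\<forall>x\<in>X. F x = f x"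
  shows "(a, \<xi>) \<in> (rho p X ^^ k) (E0 p X) \<Longrightarrow> (a, \<xi>, \<xi> (taylor p a F)) \<in> (rhoPhi p X ^^ k) (Phi0 p X f)"
proof (induction k arbitrary: a \<xi>)
  case 0
  then obtain l where "a \<in> X" "\<xi> = (\<lambda>P. l * delta p a P)" unfolding E0_def by auto
  moreover have "delta p a (taylor p a F) = f a"
    using \<open>a \<in> X\<close> Ff by (simp add: delta_def taylor_in_polys taylor_at_centre)
  ultimately show ?case unfolding Phi0_def by auto
next
  case (Suc k)
  hence "(a, \<xi>) \<in> rho p X ((rho p X ^^ k) (E0 p X))" by simp
  thus ?case using rho_lift[OF F rhoPhi_power_subset_graph[OF F Ff] Suc.IH] by simp
qed

theorem theorem1p1:
  fixes X :: "(real^'n::finite) set" and p :: nat and f F :: "real^'n \<Rightarrow> real"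
  assumes "closed X"
    and "Ck p F"
    and "\<forall>x\<in>X. F x = f x"
  shows "(\<forall>a\<in>X. \<forall>\<xi>. (a, \<xi>) \<in> tau p X \<longrightarrow> (\<exists>!l. (a, \<xi>, l) \<in> nabla p X f))
       \<and> (\<forall>a\<in>X. \<forall>\<xi>. (a, \<xi>) \<in> tau p X \<longrightarrow> (a, \<xi>, \<xi> (taylor p a F)) \<in> nabla p X f)"
proof -
  let ?k = "2 * card (midx p :: ('n \<Rightarrow> nat) set)"
  let ?\<Phi> = "\<lambda>j. (rhoPhi p X ^^ j) (Phi0 p X f)"
  have graph: "?\<Phi> j \<subseteq> taylor_graph p X F" for j
    by (rule rhoPhi_power_subset_graph[OF assms(2,3)])
  have grow: "?\<Phi> j \<subseteq> rhoPhi p X (?\<Phi> j)" for j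
    by (rule rhoPhi_inflationary) (use graph[of j] zero_in_rhoPhi_power in \<open>auto simp: taylor_graph_def\<close>)
  have nabla: "nabla p X f = rhoPhi p X (rhoPhi p X (?\<Phi> ?k))"
    unfolding nabla_def by (simp add: algebra_simps)
  have "?\<Phi> ?k \<subseteq> nabla p X f"
    using grow[of ?k] grow[of "Suc ?k"] unfolding nabla by auto
  hence "(a, \<xi>, \<xi> (taylor p a F)) \<in> nabla p X f" if "(a, \<xi>) \<in> tau p X" for a \<xi>
    using rho_power_lift[OF assms(2,3)] that unfolding tau_def by blast
  moreover have "l = \<xi> (taylor p a F)" if "(a, \<xi>, l) \<in> nabla p X f" for a \<xi> l
    using that graph[of "Suc (Suc ?k)"] unfolding nabla by (auto simp: taylor_graph_def)
  ultimately show ?thesis by blast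
qed

end
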